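(* Let $\mathbb{W}$ be a union of lines and ACM points in $\mathbb{P}^1\times\mathbb{P}^1$, let $I=I_{\mathbb{W}}$, and let $\mathcal{G}(I)=A\sqcup B$ be a partition of its standard generating set into nonempty sets. Let $J=\langle A\rangle$ and $K=\langle B\rangle$. Then $J\cap K$ is the defining ideal of a union of lines and ACM points.
   Context: $R=\mathbb{C}[x_0,x_1,y_0,y_1]$ is bigraded with $\deg x_i=(1,0)$, $\deg y_i=(0,1)$. For $A=[a_0:a_1]\in\mathbb{P}^1$ let $H_A=a_1x_0-a_0x_1$ and for $B=[b_0:b_1]$ let $V_B=b_1y_0-b_0y_1$; the same symbol denotes the form and its zero set (horizontal, resp. vertical, line or ruling). $I_{A\times B}=\langle H_A,V_B\rangle$, $I_{\mathbb{X}}=\bigcap_{P\in\mathbb{X}}I_P$, and a finite set $\mathbb{X}$ is ACM if $R/I_{\mathbb{X}}$ is Cohen–Macaulay. A union of lines and points is $\mathbb{W}=\{P_1,\dots,P_r,H_1,\dots,H_t,V_1,\dots,V_p\}$ (distinct points, horizontal lines and vertical lines, no point on any of the lines), with $\mathbb{X}_{\mathbb{W}}=\{P_1,\dots,P_r\}$ and $I_{\mathbb{W}}=\bigcap_iI_{P_i}\cap\bigcap_i\langle H_i\rangle\cap\bigcap_j\langle V_j\rangle$; it is a union of lines and ACM points if $\mathbb{X}_{\mathbb{W}}$ is ACM (only lines or only points allowed). For ACM $\mathbb{X}$ with $\pi_1(\mathbb{X})=\{A_1,\dots,A_h\}$, $\pi_2(\mathbb{X})=\{B_1,\dots,B_v\}$,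 labelled so that $\alpha_i=|\{P\in\mathbb{X}:P\in H_{A_i}\}|$ satisfies $\alpha_1\ge\cdots\ge\alpha_h$ and the counts on $V_{B_j}$ are nonincreasing, $I_{\mathbb{X}}$ is minimally generated by $\{H_{A_1}\cdots H_{A_h},\ V_{B_1}\cdots V_{B_v}\}\cup\{H_{A_1}\cdots H_{A_i}V_{B_1}\cdots V_{B_{\alpha_{i+1}}}:\alpha_{i+1}<\alpha_i\}$ (unique up to nonzero scalars). The standard generating set of $I_{\mathbb{W}}$ is this set for $\mathbb{X}=\mathbb{X}_{\mathbb{W}}$, each element multiplied by $\Lambda=\prod_iH_i\prod_jV_j$. *)

theory Defs
  imports Complex_Main "HOL-Library.Poly_Mapping"
begin

datatype var = X0 | X1 | Y0 | Y1

type_synonym poly = "(var \<Rightarrow>\<^sub>0 nat) \<Rightarrow>\<^sub>0 complex"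

definition Var :: "var \<Rightarrow> poly" where
  "Var v = Poly_Mapping.single (Poly_Mapping.single v 1) 1"

definition Const :: "complex \<Rightarrow> poly" where
  "Const c = Poly_Mapping.single 0 c"

definition tdeg :: "(var \<Rightarrow>\<^sub>0 nat) \<Rightarrow> nat" where
  "tdeg m = Poly_Mapping.lookup m X0 + Poly_Mapping.lookup m X1 + Poly_Mapping.lookup m Y0 + Poly_Mapping.lookup m Y1"

definition homog_pos :: "poly \<Rightarrow> bool" where
  "homog_pos f \<longleftrightarrow> f \<noteq> 0 \<and> (\<exists>d>0. \<forall>m\<in>Poly_Mapping.keys f. tdeg m = d)"

definition ideal_gen :: "poly set \<Rightarrow> poly set" where
  "ideal_gen S = {f. \<exists>F c. finite F \<and> F \<subseteq> S \<and> f = (\<Sum>s\<in>F. c s * s)}"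

definition nzd_mod :: "poly set \<Rightarrow> poly \<Rightarrow> bool" where
  "nzd_mod I f \<longleftrightarrow> (\<forall>g. f * g \<in> I \<longrightarrow> g \<in> I)"

text \<open>R/I is Cohen--Macaulay, for I the ideal of a finite set of points of P1 x P1
  (so Krull dim R/I = 2 when I is proper): either R/I = 0, or there is a homogeneous
  regular sequence of length 2 on R/I, i.e. depth R/I = 2 = dim R/I.\<close>
definition CM_points_ideal :: "poly set \<Rightarrow> bool" where
  "CM_points_ideal I \<longleftrightarrow> I = UNIV \<or>
     (\<exists>f g. homog_pos f \<and> homog_pos g \<and> nzd_mod I f \<and>
        nzd_mod (ideal_gen (I \<union> {f})) g \<and> ideal_gen (I \<union> {f, g}) \<noteq> UNIV)"

type_synonym p1 = "complex \<times> complex"  \<comment> \<open>homogeneous coordinates [a0:a1]\<close>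

definition valid_p1 :: "p1 \<Rightarrow> bool" where
  "valid_p1 a \<longleftrightarrow> a \<noteq> (0, 0)"

definition proj_eq :: "p1 \<Rightarrow> p1 \<Rightarrow> bool" where
  "proj_eq a b \<longleftrightarrow> fst a * snd b = snd a * fst b"

definition Hf :: "p1 \<Rightarrow> poly" where
  "Hf a = Const (snd a) * Var X0 - Const (fst a) * Var X1"

definition Vf :: "p1 \<Rightarrow> poly" where
  "Vf b = Const (snd b) * Var Y0 - Const (fst b) * Var Y1"

definition I_pt :: "p1 \<times> p1 \<Rightarrow> poly set" where
  "I_pt P = ideal_gen {Hf (fst P), Vf (snd P)}"

text \<open>W = (points, horizontal lines, vertical lines)\<close>
type_synonym lp = "(p1 \<times> p1) set \<times> p1 set \<times> p1 set"

definition pts :: "lp \<Rightarrow> (p1 \<times> p1) set" where "pts W = fst W"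
definition hls :: "lp \<Rightarrow> p1 set" where "hls W = fst (snd W)"
definition vls :: "lp \<Rightarrow> p1 set" where "vls W = snd (snd W)"

definition valid_lp :: "lp \<Rightarrow> bool" where
  "valid_lp W \<longleftrightarrow>
     finite (pts W) \<and> finite (hls W) \<and> finite (vls W) \<and>
     (\<forall>P\<in>pts W. valid_p1 (fst P) \<and> valid_p1 (snd P)) \<and>
     (\<forall>a\<in>hls W. valid_p1 a) \<and> (\<forall>b\<in>vls W. valid_p1 b) \<and>
     (\<forall>P\<in>pts W. \<forall>Q\<in>pts W. P \<noteq> Q \<longrightarrow>
         \<not> (proj_eq (fst P) (fst Q) \<and> proj_eq (snd P) (snd Q))) \<and>
     (\<forall>a\<in>hls W. \<forall>a'\<in>hls W. a \<noteq> a' \<longrightarrow> \<not> proj_eq a a') \<and>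
     (\<forall>b\<in>vls W. \<forall>b'\<in>vls W. b \<noteq> b' \<longrightarrow> \<not> proj_eq b b') \<and>
     (\<forall>P\<in>pts W. \<forall>a\<in>hls W. \<not> proj_eq (fst P) a) \<and>
     (\<forall>P\<in>pts W. \<forall>b\<in>vls W. \<not> proj_eq (snd P) b)"

definition I_W :: "lp \<Rightarrow> poly set" where
  "I_W W = {f. (\<forall>P\<in>pts W. f \<in> I_pt P) \<and> (\<forall>a\<in>hls W. f \<in> ideal_gen {Hf a}) \<and>
               (\<forall>b\<in>vls W. f \<in> ideal_gen {Vf b})}"

definition I_X :: "(p1 \<times> p1) set \<Rightarrow> poly set" where
  "I_X X = I_W (X, {}, {})"

definition ACM :: "(p1 \<times> p1) set \<Rightarrow> bool" where
  "ACM X \<longleftrightarrow> CM_points_ideal (I_X X)"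

definition union_lines_ACM_points :: "lp \<Rightarrow> bool" where
  "union_lines_ACM_points W \<longleftrightarrow> valid_lp W \<and> ACM (pts W)"

text \<open>As is a labelling A_1..A_h of pi_1(X) (0-indexed) with nonincreasing counts,
  and likewise Bs for pi_2(X).\<close>
definition good_labelling :: "(p1 \<times> p1) set \<Rightarrow> ((p1 \<times> p1) \<Rightarrow> p1) \<Rightarrow> p1 list \<Rightarrow> bool" where
  "good_labelling X pr As \<longleftrightarrow>
     (\<forall>a\<in>set As. valid_p1 a) \<and>
     (\<forall>i<length As. \<forall>j<length As. i \<noteq> j \<longrightarrow> \<not> proj_eq (As!i) (As!j)) \<and>
     (\<forall>P\<in>X. \<exists>a\<in>set As. proj_eq (pr P) a) \<and>
     (\<forall>a\<in>set As. \<exists>P\<in>X. proj_eq (pr P) a) \<and>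
     (\<forall>i j. i \<le> j \<longrightarrow> j < length As \<longrightarrow>
        card {P\<in>X. proj_eq (pr P) (As!j)} \<le> card {P\<in>X. proj_eq (pr P) (As!i)})"

definition alpha :: "(p1 \<times> p1) set \<Rightarrow> p1 list \<Rightarrow> nat \<Rightarrow> nat" where
  "alpha X As i = card {P\<in>X. proj_eq (fst P) (As!i)}"

text \<open>minimal generators of I_X for given labellings (0-indexed version of the paper's list)\<close>
definition gens_X :: "(p1 \<times> p1) set \<Rightarrow> p1 list \<Rightarrow> p1 list \<Rightarrow> poly set" where
  "gens_X X As Bs =
     {(\<Prod>k<length As. Hf (As!k)), (\<Prod>k<length Bs. Vf (Bs!k))} \<union>
     {(\<Prod>k<i. Hf (As!k)) * (\<Prod>k<alpha X As i. Vf (Bs!k)) | i.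
         0 < i \<and> i < length As \<and> alpha X As i < alpha X As (i - 1)}"

definition Lambda :: "lp \<Rightarrow> poly" where
  "Lambda W = (\<Prod>a\<in>hls W. Hf a) * (\<Prod>b\<in>vls W. Vf b)"

definition standard_gens :: "lp \<Rightarrow> poly set \<Rightarrow> bool" where
  "standard_gens W G \<longleftrightarrow>
     (\<exists>As Bs. good_labelling (pts W) fst As \<and> good_labelling (pts W) snd Bs \<and>
        G = (\<lambda>f. Lambda W * f) ` gens_X (pts W) As Bs)"

end

theory Submission
  imports Defs
begin

text \<open>The standard generators are \<open>\<Lambda>\<close> times the staircase monomials
  \<open>m(a, b) = H_{A_1} \<cdots> H_{A_a} V_{B_1} \<cdots> V_{B_b}\<close>, so \<open>\<langle>A\<rangle>\<close> and \<open>\<langle>B\<rangle>\<close> are \<open>\<Lambda>\<close> times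
  the ideals \<open>M_A, M_B\<close> generated by the monomials of the two parts.
  An ideal generated by staircase monomials is the ideal of a union of lines and points: the lines
  \<open>H_{A_i}\<close> (resp. \<open>V_{B_j}\<close>) with \<open>i\<close> (resp. \<open>j\<close>) below the corresponding coordinate of every
  corner, and the points \<open>A_i \<times> B_j\<close> with \<open>(i, j)\<close> under the staircase (induction on the number
  of horizontal lines, cancelling the factors \<open>H_{A_i}\<close> by primality).
  Hence \<open>M_A \<inter> M_B\<close> is the ideal of the lines below both staircases together with the points
  under either of them, and multiplying by \<open>\<Lambda>\<close> adds back the lines of \<open>\<bbbW>\<close>.
  Away from the new lines, the new points are those under the staircase whose corners are the
  componentwise maxima of a corner of each part; their ideal is again generated by staircase
  monomials, and for generic \<open>[c], [d] \<in> \<bbbP>\<^sup>1\<close> the forms \<open>H_c, V_d\<close> are a regular sequence on it.\<close>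

text \<open>Any linear order on the variables makes \<open>poly\<close> an instance of \<open>idom\<close>
  (through the monomial order of \<^theory>\<open>HOL-Library.Poly_Mapping\<close>).\<close>

instantiation var :: linorder
begin

fun var_index :: "var \<Rightarrow> nat" where
  "var_index X0 = 0" | "var_index X1 = 1" | "var_index Y0 = 2" | "var_index Y1 = 3"

definition less_eq_var :: "var \<Rightarrow> var \<Rightarrow> bool" where
  "less_eq_var a b \<longleftrightarrow> var_index a \<le> var_index b"

definition less_var :: "var \<Rightarrow> var \<Rightarrow> bool" where
  "less_var a b \<longleftrightarrow> var_index a < var_index b"

instance
proof
  fix x y :: var
  show "x \<le> y \<Longrightarrow> y \<le> x \<Longrightarrow> x = y"
    by (cases x; cases y) (simp_all add: less_eq_var_def)
qed (auto simp: less_eq_var_def less_var_def)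

end

section \<open>Ideals of the polynomial ring\<close>

definition is_ideal :: "poly set \<Rightarrow> bool" where
  "is_ideal I \<longleftrightarrow> 0 \<in> I \<and> (\<forall>x\<in>I. \<forall>y\<in>I. x + y \<in> I) \<and> (\<forall>r. \<forall>x\<in>I. r * x \<in> I)"

lemma is_idealI:
  assumes "0 \<in> I" "\<And>x y. x \<in> I \<Longrightarrow> y \<in> I \<Longrightarrow> x + y \<in> I" "\<And>r x. x \<in> I \<Longrightarrow> r * x \<in> I"
  shows "is_ideal I"
  using assms unfolding is_ideal_def by blast

lemma ideal_zero: "is_ideal I \<Longrightarrow> 0 \<in> I"
  by (simp add: is_ideal_def)

lemma ideal_add: "is_ideal I \<Longrightarrow> x \<in> I \<Longrightarrow> y \<in> I \<Longrightarrow> x + y \<in> I"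
  by (simp add: is_ideal_def)

lemma ideal_mult_left: "is_ideal I \<Longrightarrow> x \<in> I \<Longrightarrow> r * x \<in> I"
  by (simp add: is_ideal_def)

lemma ideal_mult_right: "is_ideal I \<Longrightarrow> x \<in> I \<Longrightarrow> x * r \<in> I"
  by (metis ideal_mult_left mult.commute)

lemma ideal_diff: "is_ideal I \<Longrightarrow> x \<in> I \<Longrightarrow> y \<in> I \<Longrightarrow> x - y \<in> I"
  using ideal_add[of I x "(-1) * y"] ideal_mult_left[of I y "-1"] by simp

lemma ideal_sum: "is_ideal I \<Longrightarrow> (\<And>i. i \<in> F \<Longrightarrow> f i \<in> I) \<Longrightarrow> sum f F \<in> I"
  by (induction F rule: infinite_finite_induct) (simp_all add: ideal_zero ideal_add)

lemma is_ideal_sum_ideals: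
  assumes I: "is_ideal I" and J: "is_ideal J"
  shows "is_ideal {x + y | x y. x \<in> I \<and> y \<in> J}"
proof (rule is_idealI)
  show "0 \<in> {x + y | x y. x \<in> I \<and> y \<in> J}"
    using I J by (auto intro!: exI[of _ 0] simp: ideal_zero)
next
  fix u w assume "u \<in> {x + y | x y. x \<in> I \<and> y \<in> J}" "w \<in> {x + y | x y. x \<in> I \<and> y \<in> J}"
  then obtain x1 y1 x2 y2 where "u = x1 + y1" "x1 \<in> I" "y1 \<in> J" "w = x2 + y2" "x2 \<in> I" "y2 \<in> J"
    by blast
  then show "u + w \<in> {x + y | x y. x \<in> I \<and> y \<in> J}"
    using I J by (intro CollectI exI[of _ "x1 + x2"] exI[of _ "y1 + y2"]) (simp add: ideal_add algebra_simps)
next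
  fix r u assume "u \<in> {x + y | x y. x \<in> I \<and> y \<in> J}"
  then obtain x y where "u = x + y" "x \<in> I" "y \<in> J" by blast
  then show "r * u \<in> {x + y | x y. x \<in> I \<and> y \<in> J}"
    using I J by (intro CollectI exI[of _ "r * x"] exI[of _ "r * y"]) (simp add: ideal_mult_left algebra_simps)
qed

lemma is_ideal_mult_ideal:
  assumes K: "is_ideal K"
  shows "is_ideal {h * k | k. k \<in> K}"
proof (rule is_idealI)
  show "0 \<in> {h * k | k. k \<in> K}" using K by (auto intro!: exI[of _ 0] simp: ideal_zero)
next
  fix u w assume "u \<in> {h * k | k. k \<in> K}" "w \<in> {h * k | k. k \<in> K}"
  then obtain k1 k2 where "u = h * k1" "k1 \<in> K" "w = h * k2" "k2 \<in> K" by blast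
  then show "u + w \<in> {h * k | k. k \<in> K}"
    using K by (intro CollectI exI[of _ "k1 + k2"]) (simp add: ideal_add algebra_simps)
next
  fix r u assume "u \<in> {h * k | k. k \<in> K}"
  then obtain k where "u = h * k" "k \<in> K" by blast
  then show "r * u \<in> {h * k | k. k \<in> K}"
    using K by (intro CollectI exI[of _ "r * k"]) (simp add: ideal_mult_left mult.left_commute)
qed

lemma is_ideal_colon: "is_ideal J \<Longrightarrow> is_ideal {x. h * x \<in> J}"
  by (rule is_idealI) (simp_all add: ideal_zero ideal_add ideal_mult_left distrib_left mult.left_commute[of h])

lemma ideal_gen_is_ideal: "is_ideal (ideal_gen S)"
proof (rule is_idealI)
  show "0 \<in> ideal_gen S"
    unfolding ideal_gen_def by (rule CollectI, rule exI[of _ "{}"]) auto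
next
  fix x y assume "x \<in> ideal_gen S" "y \<in> ideal_gen S"
  then obtain F c G d where F: "finite F" "F \<subseteq> S" "x = (\<Sum>s\<in>F. c s * s)"
    and G: "finite G" "G \<subseteq> S" "y = (\<Sum>s\<in>G. d s * s)"
    unfolding ideal_gen_def by (auto 0 0)
  define c' where "c' s = (if s \<in> F then c s else 0)" for s
  define d' where "d' s = (if s \<in> G then d s else 0)" for s
  have "x = (\<Sum>s\<in>F \<union> G. c' s * s)"
    unfolding F(3) c'_def by (rule sum.mono_neutral_cong_left) (use F G in auto)
  moreover have "y = (\<Sum>s\<in>F \<union> G. d' s * s)"
    unfolding G(3) d'_def by (rule sum.mono_neutral_cong_left) (use F G in auto)
  ultimately have "x + y = (\<Sum>s\<in>F \<union> G. (c' s + d' s) * s)"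
    by (simp add: sum.distrib distrib_right)
  then show "x + y \<in> ideal_gen S"
    unfolding ideal_gen_def by (intro CollectI exI[of _ "F \<union> G"] exI[of _ "\<lambda>s. c' s + d' s"]) (use F G in simp)
next
  fix r x assume "x \<in> ideal_gen S"
  then obtain F c where F: "finite F" "F \<subseteq> S" "x = (\<Sum>s\<in>F. c s * s)"
    unfolding ideal_gen_def by blast
  have "r * x = (\<Sum>s\<in>F. (r * c s) * s)"
    unfolding F(3) by (simp add: sum_distrib_left mult.assoc)
  then show "r * x \<in> ideal_gen S"
    unfolding ideal_gen_def by (intro CollectI exI[of _ F] exI[of _ "\<lambda>s. r * c s"]) (use F in simp)
qed

lemmas ideal_gen_closed =
  ideal_gen_is_ideal[THEN ideal_zero] ideal_gen_is_ideal[THEN ideal_add]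
  ideal_gen_is_ideal[THEN ideal_mult_left] ideal_gen_is_ideal[THEN ideal_mult_right]
  ideal_gen_is_ideal[THEN ideal_diff]

lemma ideal_gen_generator: "s \<in> S \<Longrightarrow> s \<in> ideal_gen S"
  unfolding ideal_gen_def by (rule CollectI, rule exI[of _ "{s}"], rule exI[of _ "\<lambda>_. 1"]) auto

lemma ideal_gen_least: "is_ideal I \<Longrightarrow> S \<subseteq> I \<Longrightarrow> ideal_gen S \<subseteq> I"
proof
  fix x assume I: "is_ideal I" "S \<subseteq> I" and "x \<in> ideal_gen S"
  then obtain F c where F: "finite F" "F \<subseteq> S" "x = (\<Sum>s\<in>F. c s * s)"
    unfolding ideal_gen_def by blast
  show "x \<in> I"
    unfolding F(3) using F I by (intro ideal_sum ideal_mult_left) auto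
qed

lemma ideal_gen_subsetI: "(\<And>s. s \<in> S \<Longrightarrow> s \<in> ideal_gen T) \<Longrightarrow> ideal_gen S \<subseteq> ideal_gen T"
  by (simp add: ideal_gen_is_ideal ideal_gen_least subsetI)

lemma ideal_gen_mono: "S \<subseteq> T \<Longrightarrow> ideal_gen S \<subseteq> ideal_gen T"
  by (meson ideal_gen_generator ideal_gen_subsetI subsetD)

lemma ideal_gen_image_subsetI:
  "(\<And>s. s \<in> T \<Longrightarrow> g s \<in> ideal_gen U) \<Longrightarrow> ideal_gen (g ` T) \<subseteq> ideal_gen U"
  by (rule ideal_gen_subsetI) auto

lemma ideal_gen_insert: "ideal_gen (insert a S) = {a * x + y | x y. y \<in> ideal_gen S}"
proof
  have "{a * x + y | x y. y \<in> ideal_gen S} = {x + y | x y. x \<in> {a * k | k. k \<in> UNIV} \<and> y \<in> ideal_gen S}"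
    by blast
  moreover have "is_ideal (UNIV :: poly set)"
    by (simp add: is_ideal_def)
  ultimately have "is_ideal {a * x + y | x y. y \<in> ideal_gen S}"
    using is_ideal_sum_ideals[OF is_ideal_mult_ideal ideal_gen_is_ideal, of UNIV a S] by simp
  moreover have "a = a * 1 + 0" "s = a * 0 + s" for s
    by simp_all
  then have "insert a S \<subseteq> {a * x + y | x y. y \<in> ideal_gen S}"
    using ideal_gen_closed(1) ideal_gen_generator by blast
  ultimately show "ideal_gen (insert a S) \<subseteq> {a * x + y | x y. y \<in> ideal_gen S}"
    by (rule ideal_gen_least)
  have "ideal_gen S \<subseteq> ideal_gen (insert a S)" "a \<in> ideal_gen (insert a S)"
    by (simp_all add: ideal_gen_mono subset_insertI ideal_gen_generator)
  then show "{a * x + y | x y. y \<in> ideal_gen S} \<subseteq> ideal_gen (insert a S)"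
    by (auto simp: ideal_gen_closed)
qed

lemma ideal_gen_empty: "ideal_gen {} = {0}"
  unfolding ideal_gen_def by auto

lemma ideal_gen_singleton: "ideal_gen {a} = {a * x | x. True}"
  by (simp add: ideal_gen_insert ideal_gen_empty)

lemma ideal_gen_pair: "ideal_gen {a, b} = {a * x + b * y | x y. True}"
  unfolding ideal_gen_insert[of a "{b}"] ideal_gen_singleton by blast

lemma ideal_gen_triple: "ideal_gen {a, b, c} = {a * x + b * y + c * z | x y z. True}"
  unfolding ideal_gen_insert[of a "{b, c}"] ideal_gen_pair by (auto simp: add.assoc)

lemma mem_ideal_gen_singleton_iff: "f \<in> ideal_gen {a} \<longleftrightarrow> a dvd f"
  by (auto simp: ideal_gen_singleton dvd_def)

lemma ideal_gen_dvd_mem: "a dvd x \<Longrightarrow> a \<in> ideal_gen S \<Longrightarrow> x \<in> ideal_gen S"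
  unfolding dvd_def using ideal_gen_closed(4) by blast

lemma ideal_gen_Un_ideal_gen: "ideal_gen (ideal_gen S \<union> T) = ideal_gen (S \<union> T)"
proof
  show "ideal_gen (ideal_gen S \<union> T) \<subseteq> ideal_gen (S \<union> T)"
    by (rule ideal_gen_subsetI)
       (auto intro: ideal_gen_generator subsetD[OF ideal_gen_mono[of S "S \<union> T"]])
  show "ideal_gen (S \<union> T) \<subseteq> ideal_gen (ideal_gen S \<union> T)"
    by (rule ideal_gen_mono) (auto simp: ideal_gen_generator)
qed

lemma mult_mem_ideal_gen_colon:
  "(\<And>g. g \<in> G' \<Longrightarrow> h * g \<in> ideal_gen G) \<Longrightarrow> x \<in> ideal_gen G' \<Longrightarrow> h * x \<in> ideal_gen G"
  using ideal_gen_least[OF is_ideal_colon[OF ideal_gen_is_ideal], of G' h G] by blast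

lemma ideal_gen_image_mult: "ideal_gen ((\<lambda>s. c * g s) ` T) = {c * k | k. k \<in> ideal_gen (g ` T)}"
proof
  show "ideal_gen ((\<lambda>s. c * g s) ` T) \<subseteq> {c * k | k. k \<in> ideal_gen (g ` T)}"
    by (rule ideal_gen_least) (auto intro: is_ideal_mult_ideal ideal_gen_is_ideal ideal_gen_generator)
  show "{c * k | k. k \<in> ideal_gen (g ` T)} \<subseteq> ideal_gen ((\<lambda>s. c * g s) ` T)"
  proof clarify
    fix k assume "k \<in> ideal_gen (g ` T)"
    then show "c * k \<in> ideal_gen ((\<lambda>s. c * g s) ` T)"
      by (rule mult_mem_ideal_gen_colon[rotated]) (auto intro: ideal_gen_generator)
  qed
qed

definition prime_ideal :: "poly set \<Rightarrow> bool" where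
  "prime_ideal I \<longleftrightarrow> 1 \<notin> I \<and> (\<forall>f g. f * g \<in> I \<longrightarrow> f \<in> I \<or> g \<in> I)"

lemma prime_ideal_cancel: "prime_ideal I \<Longrightarrow> a \<notin> I \<Longrightarrow> a * x \<in> I \<Longrightarrow> x \<in> I"
  unfolding prime_ideal_def by blast

lemma prime_ideal_prod_notin:
  assumes "prime_ideal I" "\<And>i. i \<in> F \<Longrightarrow> f i \<notin> I"
  shows "prod f F \<notin> I"
  using assms(2)
proof (induction F rule: infinite_finite_induct)
  case (insert x F)
  then show ?case using assms(1) unfolding prime_ideal_def by auto
qed (use assms(1) in \<open>simp_all add: prime_ideal_def\<close>)

section \<open>Substitution homomorphisms\<close>

lemma Const_0 [simp]: "Const 0 = 0" by (simp add: Const_def)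
lemma Const_1 [simp]: "Const 1 = 1" by (simp add: Const_def)
lemma Const_add: "Const (a + b) = Const a + Const b" by (simp add: Const_def single_add)
lemma Const_mult: "Const (a * b) = Const a * Const b" by (simp add: Const_def mult_single)
lemma Const_uminus: "Const (- a) = - Const a" by (simp add: Const_def single_uminus)
lemma Const_diff: "Const (a - b) = Const a - Const b" by (simp add: Const_def single_diff)
lemma Const_eq_iff [simp]: "Const a = Const b \<longleftrightarrow> a = b" by (metis Const_def lookup_single_eq)
lemma Const_eq_0_iff [simp]: "Const a = 0 \<longleftrightarrow> a = 0" by (metis Const_0 Const_eq_iff)

definition monom_subst :: "(var \<Rightarrow> poly) \<Rightarrow> (var \<Rightarrow>\<^sub>0 nat) \<Rightarrow> poly" where
  "monom_subst \<sigma> m = \<sigma> X0 ^ Poly_Mapping.lookup m X0 * \<sigma> X1 ^ Poly_Mapping.lookup m X1 * \<sigma> Y0 ^ Poly_Mapping.lookup m Y0 * \<sigma> Y1 ^ Poly_Mapping.lookup m Y1"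

definition poly_subst :: "(var \<Rightarrow> poly) \<Rightarrow> poly \<Rightarrow> poly" where
  "poly_subst \<sigma> f = (\<Sum>m\<in>Poly_Mapping.keys f. Const (Poly_Mapping.lookup f m) * monom_subst \<sigma> m)"

lemma monom_subst_0 [simp]: "monom_subst \<sigma> 0 = 1"
  by (simp add: monom_subst_def)

lemma monom_subst_add: "monom_subst \<sigma> (a + b) = monom_subst \<sigma> a * monom_subst \<sigma> b"
  by (simp add: monom_subst_def lookup_add power_add algebra_simps)

lemma poly_subst_superset:
  assumes "finite K" "Poly_Mapping.keys f \<subseteq> K"
  shows "poly_subst \<sigma> f = (\<Sum>m\<in>K. Const (Poly_Mapping.lookup f m) * monom_subst \<sigma> m)"
  unfolding poly_subst_def by (rule sum.mono_neutral_left) (use assms in \<open>auto simp: in_keys_iff\<close>)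

lemma poly_subst_0 [simp]: "poly_subst \<sigma> 0 = 0"
  by (simp add: poly_subst_def)

lemma poly_subst_add: "poly_subst \<sigma> (f + g) = poly_subst \<sigma> f + poly_subst \<sigma> g"
proof -
  let ?K = "Poly_Mapping.keys f \<union> Poly_Mapping.keys g"
  have "poly_subst \<sigma> (f + g) = (\<Sum>m\<in>?K. Const (Poly_Mapping.lookup (f + g) m) * monom_subst \<sigma> m)"
    by (rule poly_subst_superset) (use keys_add[of f g] in auto)
  also have "\<dots> = (\<Sum>m\<in>?K. Const (Poly_Mapping.lookup f m) * monom_subst \<sigma> m) + (\<Sum>m\<in>?K. Const (Poly_Mapping.lookup g m) * monom_subst \<sigma> m)"
    by (simp add: lookup_add Const_add distrib_right sum.distrib)
  also have "\<dots> = poly_subst \<sigma> f + poly_subst \<sigma> g"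
    by (simp add: poly_subst_superset[symmetric])
  finally show ?thesis .
qed

lemma poly_subst_single: "poly_subst \<sigma> (Poly_Mapping.single m c) = Const c * monom_subst \<sigma> m"
  by (simp add: poly_subst_def)

lemma update_eq_add_single: "c \<notin> Poly_Mapping.keys f \<Longrightarrow> Poly_Mapping.update c d f = f + Poly_Mapping.single c d"
  by (rule poly_mapping_eqI) (auto simp: lookup_update lookup_add lookup_single in_keys_iff when_def)

lemma poly_subst_single_mult:
  "poly_subst \<sigma> (Poly_Mapping.single a b * g) = Const b * monom_subst \<sigma> a * poly_subst \<sigma> g"
proof (induction g rule: Poly_Mapping.update_induct)
  case (update f c d)
  then show ?case
    by (simp add: update_eq_add_single distrib_left poly_subst_add mult_single poly_subst_single
        monom_subst_add Const_mult algebra_simps)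
qed simp

lemma poly_subst_mult: "poly_subst \<sigma> (f * g) = poly_subst \<sigma> f * poly_subst \<sigma> g"
proof (induction f rule: Poly_Mapping.update_induct)
  case (update f c d)
  then show ?case
    by (simp add: update_eq_add_single distrib_right poly_subst_add poly_subst_single_mult poly_subst_single)
qed simp

lemma poly_subst_uminus: "poly_subst \<sigma> (- f) = - poly_subst \<sigma> f"
  using poly_subst_add[of \<sigma> f "- f"] by (simp add: eq_neg_iff_add_eq_0 add.commute)

lemma poly_subst_diff: "poly_subst \<sigma> (f - g) = poly_subst \<sigma> f - poly_subst \<sigma> g"
  using poly_subst_add[of \<sigma> f "- g"] poly_subst_uminus[of \<sigma> g] by simp

lemma poly_subst_Const [simp]: "poly_subst \<sigma> (Const c) = Const c"
  by (simp add: Const_def poly_subst_single)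

lemma poly_subst_1 [simp]: "poly_subst \<sigma> 1 = 1"
  using poly_subst_Const[of \<sigma> 1] by simp

lemma poly_subst_Var [simp]: "poly_subst \<sigma> (Var v) = \<sigma> v"
  by (cases v) (simp_all add: Var_def poly_subst_single monom_subst_def lookup_single)

lemma poly_subst_sum: "poly_subst \<sigma> (sum f A) = (\<Sum>a\<in>A. poly_subst \<sigma> (f a))"
  by (induction A rule: infinite_finite_induct) (simp_all add: poly_subst_add)

lemma poly_subst_power: "poly_subst \<sigma> (f ^ n) = poly_subst \<sigma> f ^ n"
  by (induction n) (simp_all add: poly_subst_mult)

lemma poly_subst_poly_subst: "poly_subst \<tau> (poly_subst \<sigma> f) = poly_subst (\<lambda>v. poly_subst \<tau> (\<sigma> v)) f"
  unfolding poly_subst_def[of \<sigma> f] poly_subst_def[of "\<lambda>v. poly_subst \<tau> (\<sigma> v)" f]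
  by (simp add: poly_subst_sum poly_subst_mult monom_subst_def poly_subst_power)

lemma monom_subst_Var: "monom_subst Var m = Poly_Mapping.single m 1"
proof -
  have "Poly_Mapping.single X0 (Poly_Mapping.lookup m X0) + Poly_Mapping.single X1 (Poly_Mapping.lookup m X1)
      + Poly_Mapping.single Y0 (Poly_Mapping.lookup m Y0) + Poly_Mapping.single Y1 (Poly_Mapping.lookup m Y1) = m"
    by (rule poly_mapping_eqI) (case_tac k; simp add: lookup_add lookup_single)
  moreover have "Var v ^ k = Poly_Mapping.single (Poly_Mapping.single v k) 1" for v k
    by (induction k) (simp_all add: Var_def mult_single single_add[symmetric] add.commute)
  ultimately show ?thesis
    by (simp add: monom_subst_def mult_single)
qed

lemma poly_subst_Var_self [simp]: "poly_subst Var f = f"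
proof (rule poly_mapping_eqI)
  fix k
  have "Poly_Mapping.lookup (poly_subst Var f) k = (\<Sum>m\<in>Poly_Mapping.keys f. if m = k then Poly_Mapping.lookup f m else 0)"
    by (simp add: poly_subst_def monom_subst_Var Const_def mult_single lookup_sum lookup_single when_def)
  then show "Poly_Mapping.lookup (poly_subst Var f) k = Poly_Mapping.lookup f k"
    by (simp add: sum.delta' in_keys_iff)
qed

lemma poly_subst_mem_ideal_gen:
  assumes "x \<in> ideal_gen S" "\<And>s. s \<in> S \<Longrightarrow> poly_subst \<sigma> s \<in> ideal_gen T"
  shows "poly_subst \<sigma> x \<in> ideal_gen T"
proof -
  obtain F c where F: "finite F" "F \<subseteq> S" "x = (\<Sum>s\<in>F. c s * s)"
    using assms(1) unfolding ideal_gen_def by blast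
  have "poly_subst \<sigma> x = (\<Sum>s\<in>F. poly_subst \<sigma> (c s) * poly_subst \<sigma> s)"
    unfolding F(3) by (simp add: poly_subst_sum poly_subst_mult)
  also have "\<dots> \<in> ideal_gen T"
    using F assms(2) by (intro ideal_sum[OF ideal_gen_is_ideal] ideal_gen_closed) auto
  finally show ?thesis .
qed

lemma poly_subst_vanishes_on_ideal_gen:
  "x \<in> ideal_gen S \<Longrightarrow> (\<And>s. s \<in> S \<Longrightarrow> poly_subst \<sigma> s = 0) \<Longrightarrow> poly_subst \<sigma> x = 0"
  using poly_subst_mem_ideal_gen[of x S \<sigma> "{}"] by (simp add: ideal_gen_empty)

lemma notin_ideal_gen_by_subst:
  "poly_subst \<sigma> f \<noteq> 0 \<Longrightarrow> (\<And>s. s \<in> S \<Longrightarrow> poly_subst \<sigma> s = 0) \<Longrightarrow> f \<notin> ideal_gen S"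
  using poly_subst_vanishes_on_ideal_gen by blast

lemma prime_ideal_transport:
  assumes inv: "\<And>v. poly_subst \<tau> (\<sigma> v) = Var v"
    and ST: "\<And>s. s \<in> S \<Longrightarrow> poly_subst \<sigma> s \<in> ideal_gen T"
    and TS: "\<And>t. t \<in> T \<Longrightarrow> poly_subst \<tau> t \<in> ideal_gen S"
    and prime: "prime_ideal (ideal_gen T)"
  shows "prime_ideal (ideal_gen S)"
  unfolding prime_ideal_def
proof (intro conjI allI impI)
  show "1 \<notin> ideal_gen S"
    using poly_subst_mem_ideal_gen[OF _ ST, of 1] prime by (auto simp: prime_ideal_def)
  fix f g assume "f * g \<in> ideal_gen S"
  then have "poly_subst \<sigma> f * poly_subst \<sigma> g \<in> ideal_gen T"
    using poly_subst_mem_ideal_gen[OF _ ST] by (metis poly_subst_mult)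
  then have "poly_subst \<sigma> f \<in> ideal_gen T \<or> poly_subst \<sigma> g \<in> ideal_gen T"
    using prime unfolding prime_ideal_def by blast
  moreover have "poly_subst \<tau> (poly_subst \<sigma> h) = h" for h
    by (simp add: poly_subst_poly_subst inv)
  ultimately show "f \<in> ideal_gen S \<or> g \<in> ideal_gen S"
    using poly_subst_mem_ideal_gen[OF _ TS] by metis
qed

lemma diff_poly_subst_mem_ideal:
  assumes I: "is_ideal I" and v: "\<And>v. Var v - \<sigma> v \<in> I"
  shows "f - poly_subst \<sigma> f \<in> I"
proof -
  have mult: "a * c - b * d \<in> I" if "a - b \<in> I" "c - d \<in> I" for a b c d
  proof -
    have "a * c - b * d = (a - b) * c + b * (c - d)" by (simp add: algebra_simps)
    then show ?thesis using that I by (simp add: ideal_add ideal_mult_left ideal_mult_right)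
  qed
  have power: "a ^ n - b ^ n \<in> I" if "a - b \<in> I" for a b n
    by (induction n) (simp_all add: ideal_zero I mult that)
  have "monom_subst Var m - monom_subst \<sigma> m \<in> I" for m
    unfolding monom_subst_def by (intro mult power v)
  moreover have "f - poly_subst \<sigma> f = (\<Sum>m\<in>Poly_Mapping.keys f. Const (Poly_Mapping.lookup f m) * (monom_subst Var m - monom_subst \<sigma> m))"
    by (subst (1) poly_subst_Var_self[symmetric]) (simp add: poly_subst_def sum_subtractf algebra_simps)
  ultimately show ?thesis
    by (simp add: ideal_sum[OF I] ideal_mult_left[OF I])
qed

definition kill_vars :: "var set \<Rightarrow> var \<Rightarrow> poly" where
  "kill_vars U v = (if v \<in> U then 0 else Var v)"

lemma mem_coordinate_ideal_iff: "f \<in> ideal_gen (Var ` U) \<longleftrightarrow> poly_subst (kill_vars U) f = 0"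
proof
  show "f \<in> ideal_gen (Var ` U) \<Longrightarrow> poly_subst (kill_vars U) f = 0"
    by (rule poly_subst_vanishes_on_ideal_gen) (auto simp: kill_vars_def)
  have "f - poly_subst (kill_vars U) f \<in> ideal_gen (Var ` U)"
    by (rule diff_poly_subst_mem_ideal[OF ideal_gen_is_ideal])
       (auto simp: kill_vars_def ideal_gen_generator ideal_gen_closed)
  then show "poly_subst (kill_vars U) f = 0 \<Longrightarrow> f \<in> ideal_gen (Var ` U)"
    by simp
qed

lemma prime_coordinate_ideal: "prime_ideal (ideal_gen (Var ` U))"
  unfolding prime_ideal_def mem_coordinate_ideal_iff by (simp add: poly_subst_mult mult_eq_0_iff)

section \<open>Linear forms and prime ideals of lines and points\<close>

definition lin_form :: "var \<Rightarrow> var \<Rightarrow> complex \<Rightarrow> complex \<Rightarrow> poly" where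
  "lin_form v1 v2 u w = Const u * Var v1 + Const w * Var v2"

lemma Hf_lin_form: "Hf a = lin_form X0 X1 (snd a) (- fst a)"
  by (simp add: Hf_def lin_form_def Const_uminus)

lemma Vf_lin_form: "Vf b = lin_form Y0 Y1 (snd b) (- fst b)"
  by (simp add: Vf_def lin_form_def Const_uminus)

lemma lin_form_add: "lin_form v1 v2 u w + lin_form v1 v2 u' w' = lin_form v1 v2 (u + u') (w + w')"
  by (simp add: lin_form_def Const_add algebra_simps)

lemma lin_form_smult: "Const c * lin_form v1 v2 u w = lin_form v1 v2 (c * u) (c * w)"
  by (simp add: lin_form_def Const_mult algebra_simps)

lemma lin_form_diff: "lin_form v1 v2 u w - lin_form v1 v2 u' w' = lin_form v1 v2 (u - u') (w - w')"
  by (simp add: lin_form_def Const_diff algebra_simps)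

lemma lin_form_eq_Var [simp]: "lin_form v1 v2 1 0 = Var v1" "lin_form v1 v2 0 1 = Var v2"
  by (simp_all add: lin_form_def)

lemma Const_mult_Var: "Const c * Var v = Poly_Mapping.single (Poly_Mapping.single v 1) c"
  by (simp add: Const_def Var_def mult_single)

lemma Const_mult_Var_eq_0_iff [simp]: "Const c * Var v = 0 \<longleftrightarrow> c = 0"
  by (simp add: Const_mult_Var) (metis lookup_single_eq lookup_zero single_zero)

lemma Var_neq_0 [simp]: "Var v \<noteq> 0"
  using Const_mult_Var_eq_0_iff[of 1 v] by simp

lemma lookup_lin_form:
  assumes "v1 \<noteq> v2"
  shows "Poly_Mapping.lookup (lin_form v1 v2 u w) (Poly_Mapping.single v1 1) = u"
    and "Poly_Mapping.lookup (lin_form v1 v2 u w) (Poly_Mapping.single v2 1) = w"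
proof -
  have single_inj: "Poly_Mapping.single v (Suc 0) = Poly_Mapping.single v' (Suc 0) \<longleftrightarrow> v = v'" for v v'
    by (metis lookup_single_eq lookup_single_not_eq nat.distinct(1))
  show "Poly_Mapping.lookup (lin_form v1 v2 u w) (Poly_Mapping.single v1 1) = u"
    and "Poly_Mapping.lookup (lin_form v1 v2 u w) (Poly_Mapping.single v2 1) = w"
    using assms by (auto simp: lin_form_def Const_mult_Var lookup_add lookup_single when_def single_inj)
qed

lemma lin_form_eq_0_iff: "v1 \<noteq> v2 \<Longrightarrow> lin_form v1 v2 u w = 0 \<longleftrightarrow> u = 0 \<and> w = 0"
  by (metis lookup_lin_form lookup_zero lin_form_smult mult_zero_left Const_0)

lemma poly_subst_lin_form: "poly_subst \<sigma> (lin_form v1 v2 u w) = Const u * \<sigma> v1 + Const w * \<sigma> v2"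
  by (simp add: lin_form_def poly_subst_add poly_subst_mult)

lemma lin_form_mem_ideal_gen:
  "Var v1 \<in> ideal_gen S \<Longrightarrow> Var v2 \<in> ideal_gen S \<Longrightarrow> lin_form v1 v2 u w \<in> ideal_gen S"
  by (simp add: lin_form_def ideal_gen_closed)

lemma Hf_neq_0: "valid_p1 a \<Longrightarrow> Hf a \<noteq> 0"
  by (cases a) (auto simp: Hf_lin_form lin_form_eq_0_iff valid_p1_def)

lemma Vf_neq_0: "valid_p1 b \<Longrightarrow> Vf b \<noteq> 0"
  by (cases b) (auto simp: Vf_lin_form lin_form_eq_0_iff valid_p1_def)

definition sqnorm :: "p1 \<Rightarrow> complex" where
  "sqnorm a = fst a * cnj (fst a) + snd a * cnj (snd a)"

lemma sqnorm_neq_0: "valid_p1 a \<Longrightarrow> sqnorm a \<noteq> 0"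
proof
  assume v: "valid_p1 a" and 0: "sqnorm a = 0"
  have "sqnorm a = complex_of_real ((cmod (fst a))\<^sup>2 + (cmod (snd a))\<^sup>2)"
    unfolding sqnorm_def of_real_add complex_norm_square by simp
  then have "(cmod (fst a))\<^sup>2 + (cmod (snd a))\<^sup>2 = 0"
    using 0 by (metis of_real_eq_0_iff)
  then show False
    using v by (cases a) (simp add: valid_p1_def add_nonneg_eq_0_iff)
qed

text \<open>On \<open>x0, x1\<close> the coordinate change has the matrix with rows \<open>(a1, -a0)\<close> and
  \<open>(cnj a0, cnj a1)\<close>, of determinant \<open>sqnorm a \<noteq> 0\<close>; likewise on \<open>y0, y1\<close> with \<open>b\<close>.\<close>

definition coord_change :: "p1 \<Rightarrow> p1 \<Rightarrow> var \<Rightarrow> poly" where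
  "coord_change a b v = (case v of
     X0 \<Rightarrow> lin_form X0 X1 (snd a) (- fst a)
   | X1 \<Rightarrow> lin_form X0 X1 (cnj (fst a)) (cnj (snd a))
   | Y0 \<Rightarrow> lin_form Y0 Y1 (snd b) (- fst b)
   | Y1 \<Rightarrow> lin_form Y0 Y1 (cnj (fst b)) (cnj (snd b)))"

definition coord_change_inv :: "p1 \<Rightarrow> p1 \<Rightarrow> var \<Rightarrow> poly" where
  "coord_change_inv a b v = (case v of
     X0 \<Rightarrow> lin_form X0 X1 (cnj (snd a) / sqnorm a) (fst a / sqnorm a)
   | X1 \<Rightarrow> lin_form X0 X1 (- cnj (fst a) / sqnorm a) (snd a / sqnorm a)
   | Y0 \<Rightarrow> lin_form Y0 Y1 (cnj (snd b) / sqnorm b) (fst b / sqnorm b)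
   | Y1 \<Rightarrow> lin_form Y0 Y1 (- cnj (fst b) / sqnorm b) (snd b / sqnorm b))"

lemma coord_change_inverse:
  assumes "valid_p1 a" "valid_p1 b"
  shows "poly_subst (coord_change a b) (coord_change_inv a b v) = Var v"
    and "poly_subst (coord_change_inv a b) (coord_change a b v) = Var v"
proof -
  have "sqnorm a \<noteq> 0" "sqnorm b \<noteq> 0"
    using assms sqnorm_neq_0 by auto
  then show "poly_subst (coord_change a b) (coord_change_inv a b v) = Var v"
    and "poly_subst (coord_change_inv a b) (coord_change a b v) = Var v"
    by (cases v; simp add: coord_change_def coord_change_inv_def poly_subst_lin_form lin_form_smult
        lin_form_add; simp add: divide_simps; simp add: sqnorm_def algebra_simps)+
qed

lemma prime_ideal_coord_change_image:
  assumes "valid_p1 a" "valid_p1 b"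
  shows "prime_ideal (ideal_gen (coord_change a b ` U))"
proof (rule prime_ideal_transport[where \<sigma>="coord_change_inv a b" and \<tau>="coord_change a b"])
  show "prime_ideal (ideal_gen (Var ` U))"
    by (rule prime_coordinate_ideal)
qed (use coord_change_inverse[OF assms] in \<open>auto intro: ideal_gen_generator\<close>)

lemma coord_change_X0: "coord_change a b X0 = Hf a"
  and coord_change_Y0: "coord_change a b Y0 = Vf b"
  and coord_change_x_axis: "coord_change (0, 1) b X0 = Var X0" "coord_change (0, 1) b X1 = Var X1"
  by (simp_all add: coord_change_def Hf_lin_form Vf_lin_form)

lemma valid_p1_0_1: "valid_p1 (0, 1)"
  by (simp add: valid_p1_def)

lemma prime_ideal_H: "valid_p1 a \<Longrightarrow> prime_ideal (ideal_gen {Hf a})"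
  using prime_ideal_coord_change_image[OF _ valid_p1_0_1, of a "{X0}"] by (simp add: coord_change_X0)

lemma prime_ideal_V: "valid_p1 b \<Longrightarrow> prime_ideal (ideal_gen {Vf b})"
  using prime_ideal_coord_change_image[OF valid_p1_0_1, of b "{Y0}"] by (simp add: coord_change_Y0)

lemma prime_ideal_I_pt: "valid_p1 a \<Longrightarrow> valid_p1 b \<Longrightarrow> prime_ideal (I_pt (a, b))"
  using prime_ideal_coord_change_image[of a b "{X0, Y0}"]
  by (simp add: I_pt_def coord_change_X0 coord_change_Y0)

lemma Var_X_mem_ideal_gen_HH:
  assumes "Hf c \<in> ideal_gen S" "Hf a \<in> ideal_gen S" "\<not> proj_eq c a"
  shows "Var X0 \<in> ideal_gen S" "Var X1 \<in> ideal_gen S"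
proof -
  define D where "D = snd c * fst a - fst c * snd a"
  have D: "D \<noteq> 0"
    using assms(3) by (simp add: D_def proj_eq_def algebra_simps)
  have "Const (1 / D) * (Const (fst a) * Hf c - Const (fst c) * Hf a) = lin_form X0 X1 1 0"
    "Const (1 / D) * (Const (snd a) * Hf c - Const (snd c) * Hf a) = lin_form X0 X1 0 1"
    by (simp_all add: Hf_lin_form lin_form_smult lin_form_diff) (use D in \<open>simp_all add: D_def field_simps\<close>)
  then show "Var X0 \<in> ideal_gen S" "Var X1 \<in> ideal_gen S"
    using assms(1,2) by (metis lin_form_eq_Var ideal_gen_closed(3,5))+
qed

lemma ideal_gen_HH_eq:
  assumes "\<not> proj_eq c a"
  shows "ideal_gen (insert (Hf c) (insert (Hf a) S)) = ideal_gen (insert (Var X0) (insert (Var X1) S))"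
proof -
  have "Var X0 \<in> ideal_gen (insert (Hf c) (insert (Hf a) S))" "Var X1 \<in> ideal_gen (insert (Hf c) (insert (Hf a) S))"
    using Var_X_mem_ideal_gen_HH[OF _ _ assms] by (simp_all add: ideal_gen_generator)
  moreover have "Hf c \<in> ideal_gen (insert (Var X0) (insert (Var X1) S))"
    "Hf a \<in> ideal_gen (insert (Var X0) (insert (Var X1) S))"
    unfolding Hf_lin_form by (simp_all add: lin_form_mem_ideal_gen ideal_gen_generator)
  ultimately show ?thesis
    by (intro equalityI ideal_gen_subsetI) (auto intro: ideal_gen_generator)
qed

lemma prime_ideal_HHV:
  assumes "valid_p1 b" "\<not> proj_eq c a"
  shows "prime_ideal (ideal_gen {Hf c, Hf a, Vf b})"
  using prime_ideal_coord_change_image[OF valid_p1_0_1 assms(1), of "{X0, X1, Y0}"]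
  by (simp add: ideal_gen_HH_eq[OF assms(2)] coord_change_x_axis coord_change_Y0)

lemma prime_ideal_HH:
  assumes "\<not> proj_eq c a"
  shows "prime_ideal (ideal_gen {Hf c, Hf a})"
  using prime_coordinate_ideal[of "{X0, X1}"] ideal_gen_HH_eq[OF assms, of "{}"] by simp

section \<open>Non-membership by specialisation\<close>

lemma proj_eq_refl: "proj_eq a a"
  by (simp add: proj_eq_def mult.commute)

lemma proj_eq_sym: "proj_eq a b \<Longrightarrow> proj_eq b a"
  by (simp add: proj_eq_def mult.commute)

lemma proj_eq_trans:
  assumes "proj_eq a b" "proj_eq b c" "valid_p1 b"
  shows "proj_eq a c"
proof -
  have e1: "fst a * snd b = snd a * fst b" and e2: "fst b * snd c = snd b * fst c"
    using assms(1,2) unfolding proj_eq_def by auto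
  show ?thesis
  proof (cases "fst b = 0")
    case True
    then have "snd b \<noteq> 0"
      using assms(3) by (cases b) (simp add: valid_p1_def)
    then show ?thesis
      using e1 e2 True by (simp add: proj_eq_def)
  next
    case False
    have "fst b * (fst a * snd c) = (fst a * snd b) * fst c"
      using e2 by (simp add: algebra_simps)
    also have "\<dots> = fst b * (snd a * fst c)"
      using e1 by (simp add: algebra_simps)
    finally have "fst b * (fst a * snd c) = fst b * (snd a * fst c)" .
    then show ?thesis
      using False unfolding proj_eq_def by simp
  qed
qed

text \<open>\<open>spec_subst (Some a) B\<close> restricts the first factor to the point \<open>a\<close>
  (\<open>x0, x1 \<mapsto> a0 x0, a1 x0\<close>), so that it sends \<open>H_c\<close> to zero exactly when \<open>c = a\<close> in \<open>\<bbbP>\<^sup>1\<close>;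
  \<open>None\<close> leaves the variables alone. The point \<open>(0, 0)\<close> kills all horizontal forms.\<close>

definition spec_subst :: "p1 option \<Rightarrow> p1 option \<Rightarrow> var \<Rightarrow> poly" where
  "spec_subst A B v = (case v of
      X0 \<Rightarrow> (case A of Some a \<Rightarrow> Const (fst a) * Var X0 | None \<Rightarrow> Var X0)
    | X1 \<Rightarrow> (case A of Some a \<Rightarrow> Const (snd a) * Var X0 | None \<Rightarrow> Var X1)
    | Y0 \<Rightarrow> (case B of Some b \<Rightarrow> Const (fst b) * Var Y0 | None \<Rightarrow> Var Y0)
    | Y1 \<Rightarrow> (case B of Some b \<Rightarrow> Const (snd b) * Var Y0 | None \<Rightarrow> Var Y1))"

lemma poly_subst_spec_subst_Hf:
  "poly_subst (spec_subst A B) (Hf c) =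
     (case A of Some a \<Rightarrow> Const (snd c * fst a - fst c * snd a) * Var X0 | None \<Rightarrow> Hf c)"
  by (cases A) (simp_all add: Hf_def poly_subst_diff poly_subst_mult spec_subst_def Const_diff Const_mult
      algebra_simps)

lemma poly_subst_spec_subst_Vf:
  "poly_subst (spec_subst A B) (Vf d) =
     (case B of Some b \<Rightarrow> Const (snd d * fst b - fst d * snd b) * Var Y0 | None \<Rightarrow> Vf d)"
  by (cases B) (simp_all add: Vf_def poly_subst_diff poly_subst_mult spec_subst_def Const_diff Const_mult
      algebra_simps)

lemma cross_eq_iff_proj_eq: "snd c * fst a = fst c * snd a \<longleftrightarrow> proj_eq a c"
  by (auto simp: proj_eq_def algebra_simps)

lemmas spec_subst_simps =
  poly_subst_spec_subst_Hf poly_subst_spec_subst_Vf cross_eq_iff_proj_eq Hf_neq_0 Vf_neq_0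

lemma Hf_notin_ideal_H: "\<not> proj_eq a c \<Longrightarrow> Hf c \<notin> ideal_gen {Hf a}"
  by (rule notin_ideal_gen_by_subst[where \<sigma>="spec_subst (Some a) None"]) (auto simp: spec_subst_simps)

lemma Vf_notin_ideal_H: "valid_p1 b \<Longrightarrow> Vf b \<notin> ideal_gen {Hf a}"
  by (rule notin_ideal_gen_by_subst[where \<sigma>="spec_subst (Some a) None"]) (auto simp: spec_subst_simps)

lemma Vf_notin_ideal_V: "\<not> proj_eq b d \<Longrightarrow> Vf d \<notin> ideal_gen {Vf b}"
  by (rule notin_ideal_gen_by_subst[where \<sigma>="spec_subst None (Some b)"]) (auto simp: spec_subst_simps)

lemma Hf_notin_ideal_V: "valid_p1 a \<Longrightarrow> Hf a \<notin> ideal_gen {Vf b}"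
  by (rule notin_ideal_gen_by_subst[where \<sigma>="spec_subst None (Some b)"]) (auto simp: spec_subst_simps)

lemma Hf_notin_I_pt: "\<not> proj_eq a c \<Longrightarrow> Hf c \<notin> I_pt (a, b)"
  unfolding I_pt_def
  by (rule notin_ideal_gen_by_subst[where \<sigma>="spec_subst (Some a) (Some b)"]) (auto simp: spec_subst_simps)

lemma Vf_notin_I_pt: "\<not> proj_eq b d \<Longrightarrow> Vf d \<notin> I_pt (a, b)"
  unfolding I_pt_def
  by (rule notin_ideal_gen_by_subst[where \<sigma>="spec_subst (Some a) (Some b)"]) (auto simp: spec_subst_simps)

lemma Vf_notin_ideal_HHV: "\<not> proj_eq b d \<Longrightarrow> Vf d \<notin> ideal_gen {Hf c, Hf a, Vf b}"
  by (rule notin_ideal_gen_by_subst[where \<sigma>="spec_subst (Some (0, 0)) (Some b)"]) (auto simp: spec_subst_simps)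

lemma Vf_notin_ideal_HH: "valid_p1 d \<Longrightarrow> Vf d \<notin> ideal_gen {Hf c, Hf a}"
  by (rule notin_ideal_gen_by_subst[where \<sigma>="spec_subst (Some (0, 0)) None"]) (auto simp: spec_subst_simps)

lemma one_notin_ideal_gen:
  assumes "S \<subseteq> ideal_gen (range Hf \<union> range Vf)"
  shows "1 \<notin> ideal_gen S"
proof (rule notin_ideal_gen_by_subst[where \<sigma>="spec_subst (Some (0, 0)) (Some (0, 0))"])
  fix s assume "s \<in> S"
  then show "poly_subst (spec_subst (Some (0, 0)) (Some (0, 0))) s = 0"
    using assms by (intro poly_subst_vanishes_on_ideal_gen[of s "range Hf \<union> range Vf"]) (auto simp: spec_subst_simps)
qed simp

definition dist_list :: "p1 list \<Rightarrow> bool" where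
  "dist_list As \<longleftrightarrow> (\<forall>a\<in>set As. valid_p1 a) \<and>
     (\<forall>i<length As. \<forall>j<length As. i \<noteq> j \<longrightarrow> \<not> proj_eq (As!i) (As!j))"

lemma dist_list_valid: "dist_list As \<Longrightarrow> i < length As \<Longrightarrow> valid_p1 (As!i)"
  by (simp add: dist_list_def)

lemma dist_list_proj_eq_iff:
  "dist_list As \<Longrightarrow> i < length As \<Longrightarrow> j < length As \<Longrightarrow> proj_eq (As!i) (As!j) \<longleftrightarrow> i = j"
  by (auto simp: dist_list_def proj_eq_refl)

lemma dist_list_drop: "dist_list As \<Longrightarrow> dist_list (drop n As)"
  unfolding dist_list_def by (auto dest: in_set_dropD)

lemma dist_list_ConsD:
  assumes "dist_list (c # As)"
  shows "dist_list As" "valid_p1 c" "i < length As \<Longrightarrow> \<not> proj_eq c (As!i)"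
  using dist_list_drop[OF assms, of 1] dist_list_valid[OF assms, of 0]
    dist_list_proj_eq_iff[OF assms, of 0 "Suc i"] by simp_all

definition Hprod :: "p1 list \<Rightarrow> nat \<Rightarrow> poly" where
  "Hprod As a = (\<Prod>k<a. Hf (As!k))"

definition Vprod :: "p1 list \<Rightarrow> nat \<Rightarrow> poly" where
  "Vprod Bs b = (\<Prod>k<b. Vf (Bs!k))"

definition stair_mon :: "p1 list \<Rightarrow> p1 list \<Rightarrow> nat \<times> nat \<Rightarrow> poly" where
  "stair_mon As Bs s = Hprod As (fst s) * Vprod Bs (snd s)"

lemma stair_mon_first_column: "stair_mon As Bs (0, b) = Vprod Bs b"
  by (simp add: stair_mon_def Hprod_def)

lemma stair_mon_Cons: "stair_mon (c # As) Bs (Suc a, b) = Hf c * stair_mon As Bs (a, b)"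
  by (simp add: stair_mon_def Hprod_def prod.lessThan_Suc_shift mult.assoc del: prod.lessThan_Suc)

lemma Hprod_mem_ideal_H: "i < a \<Longrightarrow> Hprod As a \<in> ideal_gen {Hf (As!i)}"
  unfolding mem_ideal_gen_singleton_iff Hprod_def by (rule dvd_prodI) auto

lemma Vprod_mem_ideal_V: "j < b \<Longrightarrow> Vprod Bs b \<in> ideal_gen {Vf (Bs!j)}"
  unfolding mem_ideal_gen_singleton_iff Vprod_def by (rule dvd_prodI) auto

lemma Vprod_dvd: "b \<le> b' \<Longrightarrow> Vprod Bs b dvd Vprod Bs b'"
  unfolding Vprod_def by (rule prod_dvd_prod_subset) auto

lemma ideal_H_subset_I_pt: "ideal_gen {Hf a} \<subseteq> I_pt (a, b)"
  and ideal_V_subset_I_pt: "ideal_gen {Vf b} \<subseteq> I_pt (a, b)"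
  by (simp_all add: I_pt_def ideal_gen_mono)

lemma Vprod_mem_I_pt: "j < b \<Longrightarrow> Vprod Bs b \<in> I_pt (a, Bs!j)"
  using Vprod_mem_ideal_V ideal_V_subset_I_pt by blast

lemma mem_ideal_gen_insert_prod:
  assumes "finite F"
    and "\<And>x. x \<in> F \<Longrightarrow> prime_ideal (ideal_gen (insert (p x) E))"
    and "\<And>x y. x \<in> F \<Longrightarrow> y \<in> F \<Longrightarrow> y \<noteq> x \<Longrightarrow> p y \<notin> ideal_gen (insert (p x) E)"
    and "\<And>x. x \<in> F \<Longrightarrow> f \<in> ideal_gen (insert (p x) E)"
  shows "f \<in> ideal_gen (insert (prod p F) E)"
  using assms
proof (induction F rule: finite_induct)
  case empty
  have "1 \<in> ideal_gen (insert 1 E)"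
    by (simp add: ideal_gen_generator)
  then show ?case
    using ideal_gen_closed(4)[of 1 "insert 1 E" f] by simp
next
  case (insert x F)
  let ?I = "ideal_gen (insert (p x) E)"
  have "f \<in> ideal_gen (insert (prod p F) E)"
    using insert.IH insert.prems by blast
  then obtain r e where fe: "f = prod p F * r + e" "e \<in> ideal_gen E"
    by (auto simp: ideal_gen_insert)
  have "e \<in> ?I"
    using fe(2) ideal_gen_mono[of E "insert (p x) E"] by blast
  then have "prod p F * r \<in> ?I"
    using insert.prems(3) fe(1) ideal_gen_closed(5)[of f "insert (p x) E" e] by simp
  moreover have "prod p F \<notin> ?I"
    by (rule prime_ideal_prod_notin) (use insert in auto)
  ultimately have "r \<in> ?I"
    using prime_ideal_cancel insert.prems(1) by blast
  then obtain y e' where re: "r = p x * y + e'" "e' \<in> ideal_gen E"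
    by (auto simp: ideal_gen_insert)
  have "f = prod p (insert x F) * y + (prod p F * e' + e)"
    using fe(1) re(1) insert.hyps by (simp add: algebra_simps)
  moreover have "prod p F * e' + e \<in> ideal_gen E"
    using re(2) fe(2) by (simp add: ideal_gen_closed)
  ultimately show ?case
    by (auto simp: ideal_gen_insert)
qed

lemma mem_ideal_gen_Vprod:
  assumes "dist_list Bs" "b \<le> length Bs" "\<And>j. j < b \<Longrightarrow> f \<in> ideal_gen {Vf (Bs!j)}"
  shows "f \<in> ideal_gen {Vprod Bs b}"
  using mem_ideal_gen_insert_prod[of "{..<b}" "\<lambda>k. Vf (Bs!k)" "{}" f] assms
  by (simp add: Vprod_def prime_ideal_V dist_list_valid Vf_notin_ideal_V dist_list_proj_eq_iff)

lemma mem_ideal_gen_H_Vprod: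
  assumes "dist_list Bs" "b \<le> length Bs" "valid_p1 c" "\<And>j. j < b \<Longrightarrow> f \<in> I_pt (c, Bs!j)"
  shows "f \<in> ideal_gen {Hf c, Vprod Bs b}"
proof -
  have I_pt_eq: "ideal_gen (insert (Vf (Bs!j)) {Hf c}) = I_pt (c, Bs!j)" for j
    by (simp add: I_pt_def insert_commute)
  have "f \<in> ideal_gen (insert (\<Prod>k<b. Vf (Bs!k)) {Hf c})"
    by (rule mem_ideal_gen_insert_prod)
       (use assms in \<open>auto simp: I_pt_eq prime_ideal_I_pt dist_list_valid Vf_notin_I_pt dist_list_proj_eq_iff\<close>)
  then show ?thesis
    by (simp add: Vprod_def insert_commute)
qed

section \<open>Ideals generated by staircase monomials\<close>

definition under_stair :: "(nat \<times> nat) set \<Rightarrow> nat \<Rightarrow> nat \<Rightarrow> bool" where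
  "under_stair S i j \<longleftrightarrow> (\<forall>s\<in>S. i < fst s \<or> j < snd s)"

text \<open>The ideal of the union of the lines and points on which every \<open>stair_mon As Bs s\<close>,
  \<open>s \<in> S\<close>, vanishes.\<close>

definition stair_ideal :: "p1 list \<Rightarrow> p1 list \<Rightarrow> (nat \<times> nat) set \<Rightarrow> poly set" where
  "stair_ideal As Bs S = {f.
     (\<forall>i. (\<forall>s\<in>S. i < fst s) \<longrightarrow> f \<in> ideal_gen {Hf (As!i)}) \<and>
     (\<forall>j. (\<forall>s\<in>S. j < snd s) \<longrightarrow> f \<in> ideal_gen {Vf (Bs!j)}) \<and>
     (\<forall>i<length As. \<forall>j<length Bs. under_stair S i j \<longrightarrow> f \<in> I_pt (As!i, Bs!j))}"

definition shift_fst :: "(nat \<times> nat) set \<Rightarrow> (nat \<times> nat) set" where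
  "shift_fst T = (\<lambda>s. (Suc (fst s), snd s)) ` T"

lemma is_ideal_stair_ideal: "is_ideal (stair_ideal As Bs S)"
  by (rule is_idealI) (auto simp: stair_ideal_def I_pt_def ideal_gen_closed)

lemma stair_mon_mem_stair_ideal:
  assumes "s \<in> S"
  shows "stair_mon As Bs s \<in> stair_ideal As Bs S"
proof -
  have H: "stair_mon As Bs s \<in> ideal_gen {Hf (As!i)}" if "i < fst s" for i
    using Hprod_mem_ideal_H[OF that] by (simp add: stair_mon_def ideal_gen_closed)
  have V: "stair_mon As Bs s \<in> ideal_gen {Vf (Bs!j)}" if "j < snd s" for j
    using Vprod_mem_ideal_V[OF that] by (simp add: stair_mon_def ideal_gen_closed)
  show ?thesis
    using assms H V ideal_H_subset_I_pt ideal_V_subset_I_pt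
    unfolding stair_ideal_def under_stair_def by blast
qed

lemma ideal_gen_stair_mon_subset: "ideal_gen (stair_mon As Bs ` S) \<subseteq> stair_ideal As Bs S"
  by (rule ideal_gen_least[OF is_ideal_stair_ideal]) (auto intro: stair_mon_mem_stair_ideal)

lemma ideal_gen_stair_mon_shift_fst:
  "ideal_gen (stair_mon (c # As) Bs ` shift_fst T) = {Hf c * k | k. k \<in> ideal_gen (stair_mon As Bs ` T)}"
  using ideal_gen_image_mult[of "Hf c" "stair_mon As Bs" T]
  by (simp add: shift_fst_def image_image stair_mon_Cons)

lemma Hf_head_cancel:
  assumes dA: "dist_list (c # As)"
  shows "i < length As \<Longrightarrow> Hf c * x \<in> ideal_gen {Hf (As!i)} \<Longrightarrow> x \<in> ideal_gen {Hf (As!i)}"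
    and "dist_list Bs \<Longrightarrow> j < length Bs \<Longrightarrow> Hf c * x \<in> ideal_gen {Vf (Bs!j)} \<Longrightarrow> x \<in> ideal_gen {Vf (Bs!j)}"
    and "dist_list Bs \<Longrightarrow> i < length As \<Longrightarrow> j < length Bs \<Longrightarrow> Hf c * x \<in> I_pt (As!i, Bs!j) \<Longrightarrow>
      x \<in> I_pt (As!i, Bs!j)"
proof -
  have valid_c: "valid_p1 c" and dA': "dist_list As"
    using dist_list_ConsD[OF dA] by simp_all
  have c_new: "\<not> proj_eq (As!i) c" if "i < length As" for i
    using dist_list_ConsD(3)[OF dA that] proj_eq_sym by blast
  show "i < length As \<Longrightarrow> Hf c * x \<in> ideal_gen {Hf (As!i)} \<Longrightarrow> x \<in> ideal_gen {Hf (As!i)}"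
    using prime_ideal_cancel[OF prime_ideal_H Hf_notin_ideal_H[OF c_new]] dist_list_valid[OF dA'] by blast
  show "dist_list Bs \<Longrightarrow> j < length Bs \<Longrightarrow> Hf c * x \<in> ideal_gen {Vf (Bs!j)} \<Longrightarrow> x \<in> ideal_gen {Vf (Bs!j)}"
    using prime_ideal_cancel[OF prime_ideal_V Hf_notin_ideal_V[OF valid_c]] dist_list_valid by blast
  show "dist_list Bs \<Longrightarrow> i < length As \<Longrightarrow> j < length Bs \<Longrightarrow> Hf c * x \<in> I_pt (As!i, Bs!j) \<Longrightarrow>
      x \<in> I_pt (As!i, Bs!j)"
    using prime_ideal_cancel[OF prime_ideal_I_pt Hf_notin_I_pt[OF c_new]] dist_list_valid dist_list_valid[OF dA']
    by blast
qed

lemma Hf_mult_mem_stair_ideal_shift_fstD: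
  assumes dA: "dist_list (c # As)" and dB: "dist_list Bs"
    and T: "T \<noteq> {}" "\<forall>s\<in>T. fst s \<le> length As \<and> snd s \<le> length Bs"
    and q: "Hf c * q \<in> stair_ideal (c # As) Bs (shift_fst T)"
  shows "q \<in> stair_ideal As Bs T"
proof -
  note cancel_H = Hf_head_cancel(1)[OF dA] and cancel_V = Hf_head_cancel(2)[OF dA dB]
    and cancel_P = Hf_head_cancel(3)[OF dA dB]
  obtain t where t: "t \<in> T"
    using T(1) by blast
  show ?thesis
    unfolding stair_ideal_def
  proof (intro CollectI conjI allI impI)
    fix i assume i: "\<forall>s\<in>T. i < fst s"
    then have "\<forall>s\<in>shift_fst T. Suc i < fst s"
      by (simp add: shift_fst_def)
    then have "Hf c * q \<in> ideal_gen {Hf ((c # As)!Suc i)}"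
      using q unfolding stair_ideal_def by blast
    moreover have "i < length As"
      using i t T(2) by fastforce
    ultimately show "q \<in> ideal_gen {Hf (As!i)}"
      using cancel_H by simp
  next
    fix j assume j: "\<forall>s\<in>T. j < snd s"
    then have "Hf c * q \<in> ideal_gen {Vf (Bs!j)}"
      using q by (auto simp: stair_ideal_def shift_fst_def)
    moreover have "j < length Bs"
      using j t T(2) by fastforce
    ultimately show "q \<in> ideal_gen {Vf (Bs!j)}"
      using cancel_V by blast
  next
    fix i j assume ij: "i < length As" "j < length Bs" "under_stair T i j"
    then have "under_stair (shift_fst T) (Suc i) j"
      by (simp add: under_stair_def shift_fst_def)
    moreover have "Suc i < length (c # As)"
      using ij(1) by simp
    ultimately have "Hf c * q \<in> I_pt ((c # As)!Suc i, Bs!j)"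
      using q ij(2) unfolding stair_ideal_def by blast
    then show "q \<in> I_pt (As!i, Bs!j)"
      using cancel_P ij(1,2) by simp
  qed
qed

lemma shift_fst_pred_fst:
  "\<forall>s\<in>S. 0 < fst s \<Longrightarrow> shift_fst ((\<lambda>s. (fst s - 1, snd s)) ` S) = S"
  by (force simp: shift_fst_def image_image intro: rev_image_eqI)

lemma stair_ideal_subset_Cons_pos:
  assumes dA: "dist_list (c # As)" and dB: "dist_list Bs"
    and S: "finite S" "S \<noteq> {}" "\<forall>s\<in>S. 0 < fst s \<and> fst s \<le> length (c # As) \<and> snd s \<le> length Bs"
    and IH: "\<And>T. finite T \<Longrightarrow> T \<noteq> {} \<Longrightarrow> \<forall>s\<in>T. fst s \<le> length As \<and> snd s \<le> length Bs \<Longrightarrow>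
      stair_ideal As Bs T \<subseteq> ideal_gen (stair_mon As Bs ` T)"
  shows "stair_ideal (c # As) Bs S \<subseteq> ideal_gen (stair_mon (c # As) Bs ` S)"
proof
  fix f assume f: "f \<in> stair_ideal (c # As) Bs S"
  define T where "T = (\<lambda>s. (fst s - 1, snd s)) ` S"
  have shift_T: "shift_fst T = S"
    unfolding T_def using S(3) shift_fst_pred_fst[of S] by blast
  have T: "finite T" "T \<noteq> {}" "\<forall>s\<in>T. fst s \<le> length As \<and> snd s \<le> length Bs"
    using S by (auto simp: T_def)
  have "f \<in> ideal_gen {Hf ((c # As)!0)}"
    using f S(3) unfolding stair_ideal_def by blast
  then obtain q where q: "f = Hf c * q"
    by (auto simp: ideal_gen_singleton)
  then have "q \<in> stair_ideal As Bs T"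
    using Hf_mult_mem_stair_ideal_shift_fstD[OF dA dB T(2,3)] f shift_T by simp
  then have "q \<in> ideal_gen (stair_mon As Bs ` T)"
    using IH[OF T] by blast
  then show "f \<in> ideal_gen (stair_mon (c # As) Bs ` S)"
    unfolding q shift_T[symmetric] ideal_gen_stair_mon_shift_fst by blast
qed

lemma Hf_mult_mem_stair_ideal_first_column:
  assumes row0: "\<forall>s\<in>S. fst s = 0 \<longrightarrow> b \<le> snd s"
    and f: "f \<in> stair_ideal (c # As) Bs S" and q: "Hf c * q = f - Vprod Bs b * r"
  shows "Hf c * q \<in> stair_ideal (c # As) Bs (insert (1, b) {s\<in>S. 0 < fst s})"
  unfolding stair_ideal_def
proof (intro CollectI conjI allI impI)
  let ?S' = "insert (1, b) {s\<in>S. 0 < fst s}"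
  have Vprod_r: "Vprod Bs b * r \<in> I_pt (a, Bs!j)" "Vprod Bs b * r \<in> ideal_gen {Vf (Bs!j)}" if "j < b" for a j
    using Vprod_mem_I_pt[OF that] Vprod_mem_ideal_V[OF that] by (simp_all add: I_pt_def ideal_gen_closed)
  fix i assume "\<forall>s\<in>?S'. i < fst s"
  then have "i = 0"
    by simp
  then show "Hf c * q \<in> ideal_gen {Hf ((c # As)!i)}"
    by (simp add: ideal_gen_closed ideal_gen_generator)
next
  let ?S' = "insert (1, b) {s\<in>S. 0 < fst s}"
  fix j assume j: "\<forall>s\<in>?S'. j < snd s"
  then have "j < b" "\<forall>s\<in>S. j < snd s"
    using row0 by fastforce+
  then show "Hf c * q \<in> ideal_gen {Vf (Bs!j)}"
    using f Vprod_mem_ideal_V[of j b Bs] unfolding q stair_ideal_def by (simp add: ideal_gen_closed)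
next
  fix i j assume ij: "i < length (c # As)" "j < length Bs" "under_stair (insert (1, b) {s\<in>S. 0 < fst s}) i j"
  show "Hf c * q \<in> I_pt ((c # As)!i, Bs!j)"
  proof (cases i)
    case 0
    then show ?thesis
      by (simp add: I_pt_def ideal_gen_closed ideal_gen_generator)
  next
    case (Suc i')
    then have "j < b" "under_stair S i j"
      using ij(3) row0 by (fastforce simp: under_stair_def)+
    then have "f \<in> I_pt ((c # As)!i, Bs!j)" "Vprod Bs b * r \<in> I_pt ((c # As)!i, Bs!j)"
      using f ij(1,2) Vprod_mem_I_pt[of j b Bs] unfolding stair_ideal_def by (auto simp: I_pt_def ideal_gen_closed)
    then show ?thesis
      unfolding q by (simp add: I_pt_def ideal_gen_closed)
  qed
qed

text \<open>With a corner \<open>(0, b)\<close> in the first column, \<open>f = H_c q + V_{B_0} \<cdots> V_{B_{b-1}} r\<close>, and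
  \<open>q\<close> is governed by the staircase obtained by deleting the first column and keeping \<open>(0, b)\<close>.\<close>

lemma stair_ideal_subset_Cons_zero:
  assumes dA: "dist_list (c # As)" and dB: "dist_list Bs"
    and S: "finite S" "\<forall>s\<in>S. fst s \<le> length (c # As) \<and> snd s \<le> length Bs"
    and s0: "(0, b) \<in> S" "\<forall>s\<in>S. fst s = 0 \<longrightarrow> b \<le> snd s"
    and IH: "\<And>T. finite T \<Longrightarrow> T \<noteq> {} \<Longrightarrow> \<forall>s\<in>T. fst s \<le> length As \<and> snd s \<le> length Bs \<Longrightarrow>
      stair_ideal As Bs T \<subseteq> ideal_gen (stair_mon As Bs ` T)"
  shows "stair_ideal (c # As) Bs S \<subseteq> ideal_gen (stair_mon (c # As) Bs ` S)"
proof
  fix f assume f: "f \<in> stair_ideal (c # As) Bs S"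
  let ?J = "ideal_gen (stair_mon (c # As) Bs ` S)"
  define T where "T = insert (0, b) ((\<lambda>s. (fst s - 1, snd s)) ` {s\<in>S. 0 < fst s})"
  have shift_T: "shift_fst T = insert (1, b) {s\<in>S. 0 < fst s}"
    using shift_fst_pred_fst[of "{s\<in>S. 0 < fst s}"] by (simp add: T_def shift_fst_def)
  have T: "finite T" "T \<noteq> {}" "\<forall>s\<in>T. fst s \<le> length As \<and> snd s \<le> length Bs"
    using S s0 by (auto simp: T_def)
  have b_le: "b \<le> length Bs"
    using S(2) s0(1) by auto
  have "f \<in> ideal_gen {Hf c, Vprod Bs b}"
  proof (rule mem_ideal_gen_H_Vprod[OF dB b_le dist_list_ConsD(2)[OF dA]])
    fix j assume j: "j < b"
    then have "under_stair S 0 j"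
      using s0(2) by (force simp: under_stair_def)
    then show "f \<in> I_pt (c, Bs!j)"
      using f j b_le unfolding stair_ideal_def by fastforce
  qed
  then obtain q r where qr: "f = Hf c * q + Vprod Bs b * r"
    by (auto simp: ideal_gen_pair)
  then have "Hf c * q = f - Vprod Bs b * r"
    by simp
  then have "Hf c * q \<in> stair_ideal (c # As) Bs (shift_fst T)"
    unfolding shift_T by (rule Hf_mult_mem_stair_ideal_first_column[OF s0(2) f])
  then have "q \<in> stair_ideal As Bs T"
    by (rule Hf_mult_mem_stair_ideal_shift_fstD[OF dA dB T(2,3)])
  then have "q \<in> ideal_gen (stair_mon As Bs ` T)"
    using IH[OF T] by blast
  then have "Hf c * q \<in> ideal_gen (stair_mon (c # As) Bs ` shift_fst T)"
    unfolding ideal_gen_stair_mon_shift_fst by blast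
  moreover have "ideal_gen (stair_mon (c # As) Bs ` shift_fst T) \<subseteq> ?J"
  proof (rule ideal_gen_image_subsetI)
    fix s assume "s \<in> shift_fst T"
    then consider "s = (1, b)" | "s \<in> S"
      by (auto simp: shift_T)
    then show "stair_mon (c # As) Bs s \<in> ?J"
    proof cases
      case 1
      then have "stair_mon (c # As) Bs s = Hf c * stair_mon (c # As) Bs (0, b)"
        by (simp add: stair_mon_Cons stair_mon_first_column)
      then show ?thesis
        using s0(1) by (simp add: ideal_gen_closed ideal_gen_generator)
    qed (simp add: ideal_gen_generator)
  qed
  moreover have "stair_mon (c # As) Bs (0, b) \<in> ?J"
    using s0(1) by (intro ideal_gen_generator imageI)
  then have "Vprod Bs b * r \<in> ?J"
    by (simp add: stair_mon_first_column ideal_gen_closed)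
  ultimately show "f \<in> ?J"
    using qr by (auto simp: ideal_gen_closed)
qed

lemma finite_obtain_min_snd:
  fixes X :: "('a \<times> nat) set"
  assumes "finite X" "X \<noteq> {}"
  obtains x where "x \<in> X" "\<forall>y\<in>X. snd x \<le> snd y"
proof -
  have "Min (snd ` X) \<in> snd ` X"
    using assms by simp
  then obtain x where "x \<in> X" "snd x = Min (snd ` X)"
    by force
  then show ?thesis
    using that assms(1) by simp
qed

theorem ideal_gen_stair_mon_eq:
  assumes "dist_list As" "dist_list Bs" "finite S" "S \<noteq> {}"
    and "\<forall>s\<in>S. fst s \<le> length As \<and> snd s \<le> length Bs"
  shows "ideal_gen (stair_mon As Bs ` S) = stair_ideal As Bs S"
proof
  show "stair_ideal As Bs S \<subseteq> ideal_gen (stair_mon As Bs ` S)"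
    using assms
  proof (induction As arbitrary: S)
    case Nil
    obtain s0 where s0: "s0 \<in> S" "\<forall>s\<in>S. snd s0 \<le> snd s"
      using finite_obtain_min_snd Nil.prems(3,4) by blast
    have "s0 = (0, snd s0)"
      using s0(1) Nil.prems(5) by (simp add: prod_eq_iff)
    then have "Vprod Bs (snd s0) \<in> ideal_gen (stair_mon [] Bs ` S)"
      using s0(1) stair_mon_first_column[of "[]" Bs "snd s0"] by (metis ideal_gen_generator imageI)
    then have Vprod: "ideal_gen {Vprod Bs (snd s0)} \<subseteq> ideal_gen (stair_mon [] Bs ` S)"
      by (intro ideal_gen_subsetI) simp
    show ?case
    proof
      fix f assume f: "f \<in> stair_ideal [] Bs S"
      have "\<forall>s\<in>S. j < snd s" if "j < snd s0" for j
        using s0(2) that by fastforce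
      then have "f \<in> ideal_gen {Vprod Bs (snd s0)}"
        using f s0(1) Nil.prems(2,5) by (intro mem_ideal_gen_Vprod) (auto simp: stair_ideal_def)
      then show "f \<in> ideal_gen (stair_mon [] Bs ` S)"
        using Vprod by blast
    qed
  next
    case (Cons c As)
    note IH = Cons.IH[OF dist_list_ConsD(1)[OF Cons.prems(1)] Cons.prems(2)]
    show ?case
    proof (cases "\<exists>s\<in>S. fst s = 0")
      case True
      then obtain s0 where s0: "s0 \<in> {s\<in>S. fst s = 0}" "\<forall>s\<in>{s\<in>S. fst s = 0}. snd s0 \<le> snd s"
        using finite_obtain_min_snd[of "{s\<in>S. fst s = 0}"] Cons.prems(3) by auto
      then have "(0, snd s0) \<in> S"
        by (metis (mono_tags, lifting) mem_Collect_eq prod.collapse)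
      moreover have "\<forall>s\<in>S. fst s = 0 \<longrightarrow> snd s0 \<le> snd s"
        using s0(2) by blast
      ultimately show ?thesis
        by (rule stair_ideal_subset_Cons_zero[OF Cons.prems(1,2,3,5) _ _ IH])
    next
      case False
      then have "\<forall>s\<in>S. 0 < fst s \<and> fst s \<le> length (c # As) \<and> snd s \<le> length Bs"
        using Cons.prems(5) by auto
      then show ?thesis
        by (rule stair_ideal_subset_Cons_pos[OF Cons.prems(1-4) _ IH])
    qed
  qed
qed (rule ideal_gen_stair_mon_subset)

section \<open>A regular sequence modulo a staircase ideal\<close>

lemma regular_mod_H_Vprod:
  assumes dB: "dist_list Bs" and b: "b \<le> length Bs" and c: "valid_p1 c"
    and g: "\<And>j. j < b \<Longrightarrow> g \<notin> I_pt (c, Bs!j)"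
    and gx: "g * x \<in> ideal_gen {Hf c, Vprod Bs b}"
  shows "x \<in> ideal_gen {Hf c, Vprod Bs b}"
proof (rule mem_ideal_gen_H_Vprod[OF dB b c])
  fix j assume j: "j < b"
  have "ideal_gen {Hf c, Vprod Bs b} \<subseteq> I_pt (c, Bs!j)"
    using Vprod_mem_I_pt[OF j, of Bs c] unfolding I_pt_def
    by (intro ideal_gen_subsetI) (auto simp: ideal_gen_generator)
  then show "x \<in> I_pt (c, Bs!j)"
    using gx prime_ideal_cancel[OF prime_ideal_I_pt[OF c dist_list_valid[OF dB]] g] j b by auto
qed

lemma Vf_regular_mod_HH_Vprod:
  assumes dB: "dist_list Bs" and b: "b \<le> length Bs" and ca: "\<not> proj_eq c a"
    and d: "\<And>j. j < b \<Longrightarrow> \<not> proj_eq (Bs!j) d"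
    and dx: "Vf d * x \<in> ideal_gen (insert (Vprod Bs b) {Hf c, Hf a})"
  shows "x \<in> ideal_gen (insert (Vprod Bs b) {Hf c, Hf a})"
  unfolding Vprod_def
proof (rule mem_ideal_gen_insert_prod)
  have eq: "insert (Vf (Bs!j)) {Hf c, Hf a} = {Hf c, Hf a, Vf (Bs!j)}" for j
    by auto
  fix j assume j: "j \<in> {..<b}"
  then have prime: "prime_ideal (ideal_gen (insert (Vf (Bs!j)) {Hf c, Hf a}))"
    using prime_ideal_HHV[OF dist_list_valid[OF dB] ca] b by (simp add: eq)
  then show "prime_ideal (ideal_gen (insert (Vf (Bs!j)) {Hf c, Hf a}))" .
  have "Vprod Bs b \<in> ideal_gen (insert (Vf (Bs!j)) {Hf c, Hf a})"
    using Vprod_mem_ideal_V[of j b Bs] j ideal_gen_mono[of "{Vf (Bs!j)}" "insert (Vf (Bs!j)) {Hf c, Hf a}"]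
    by auto
  then have "ideal_gen (insert (Vprod Bs b) {Hf c, Hf a}) \<subseteq> ideal_gen (insert (Vf (Bs!j)) {Hf c, Hf a})"
    by (intro ideal_gen_subsetI) (auto simp: ideal_gen_generator)
  then have "Vf d * x \<in> ideal_gen {Hf c, Hf a, Vf (Bs!j)}"
    using dx by (auto simp: eq Vprod_def)
  moreover have "j < b"
    using j by simp
  ultimately show "x \<in> ideal_gen (insert (Vf (Bs!j)) {Hf c, Hf a})"
    unfolding eq using prime_ideal_cancel[OF prime[unfolded eq] Vf_notin_ideal_HHV[OF d]] by blast
  fix k assume "k \<in> {..<b}" "k \<noteq> j"
  then show "Vf (Bs!k) \<notin> ideal_gen (insert (Vf (Bs!j)) {Hf c, Hf a})"
    using Vf_notin_ideal_HHV dist_list_proj_eq_iff[OF dB] j b by (simp add: eq)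
qed simp

lemma nzd_mod_by_split:
  assumes ideals: "is_ideal J" "is_ideal J'" "is_ideal E"
    and sub: "E \<subseteq> J" "E \<subseteq> J'" "K \<subseteq> J'"
    and split: "J \<subseteq> {x + y | x y. x \<in> E \<and> y \<in> {h * k | k. k \<in> K}}"
    and colon: "\<And>x. x \<in> J' \<Longrightarrow> h * x \<in> J"
    and cancel: "\<And>x. h * x \<in> E \<Longrightarrow> x \<in> E"
    and base: "\<And>x. v * x \<in> J \<Longrightarrow> \<exists>e w. x = e + h * w \<and> e \<in> E"
    and regular: "nzd_mod J' v"
  shows "nzd_mod J v"
  unfolding nzd_mod_def
proof (intro allI impI)
  fix q assume vq: "v * q \<in> J"
  obtain e w where q: "q = e + h * w" "e \<in> E"
    using base[OF vq] by blast
  have "v * (h * w) = v * q - v * e"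
    using q(1) by (simp add: algebra_simps)
  also have "\<dots> \<in> J"
    using vq q(2) sub(1) ideals(1) by (simp add: ideal_diff ideal_mult_left subset_iff)
  finally obtain e' k where ek: "v * (h * w) = e' + h * k" "e' \<in> E" "k \<in> K"
    using split by blast
  have "h * (v * w - k) = e'"
    using ek(1) by (simp add: algebra_simps)
  then have "v * w - k \<in> J'"
    using cancel ek(2) sub(2) by auto
  then have "v * w \<in> J'"
    using ek(3) sub(3) ideal_add[OF ideals(2), of "v * w - k" k] by auto
  then have "h * w \<in> J"
    using regular colon unfolding nzd_mod_def by blast
  then show "q \<in> J"
    using q sub(1) ideal_add[OF ideals(1)] by auto
qed

lemma ideal_gen_subset_sum_mult:
  assumes "\<And>g. g \<in> G \<Longrightarrow> g \<in> ideal_gen E \<or> (\<exists>k\<in>ideal_gen K. g = h * k)"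
  shows "ideal_gen G \<subseteq> {x + y | x y. x \<in> ideal_gen E \<and> y \<in> {h * k | k. k \<in> ideal_gen K}}"
proof (rule ideal_gen_least)
  show "is_ideal {x + y | x y. x \<in> ideal_gen E \<and> y \<in> {h * k | k. k \<in> ideal_gen K}}"
    by (intro is_ideal_sum_ideals is_ideal_mult_ideal ideal_gen_is_ideal)
  have "g = g + h * 0" "g = 0 + g" for g
    by simp_all
  then show "G \<subseteq> {x + y | x y. x \<in> ideal_gen E \<and> y \<in> {h * k | k. k \<in> ideal_gen K}}"
    using assms ideal_gen_closed(1) by blast
qed

lemma stair_mon_Cons_pred:
  "0 < fst s \<Longrightarrow> stair_mon (a # As) Bs s = Hf a * stair_mon As Bs (fst s - 1, snd s)"
  using stair_mon_Cons[of a As Bs "fst s - 1" "snd s"] by simp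

lemma nzd_mod_Vf_stair_Cons_pos:
  assumes c: "valid_p1 c" "\<not> proj_eq c a" and d: "valid_p1 d"
    and IH: "nzd_mod (ideal_gen (insert (Hf c) (stair_mon As Bs ` T))) (Vf d)"
  shows "nzd_mod (ideal_gen (insert (Hf c) (stair_mon (a # As) Bs ` shift_fst T))) (Vf d)"
proof (rule nzd_mod_by_split[OF ideal_gen_is_ideal ideal_gen_is_ideal ideal_gen_is_ideal _ _ _ _ _ _ _ IH])
  let ?J = "ideal_gen (insert (Hf c) (stair_mon (a # As) Bs ` shift_fst T))"
  have shifted: "Hf a * stair_mon As Bs s \<in> stair_mon (a # As) Bs ` shift_fst T" if "s \<in> T" for s
  proof -
    have "stair_mon (a # As) Bs (Suc (fst s), snd s) \<in> stair_mon (a # As) Bs ` shift_fst T"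
      using that unfolding shift_fst_def image_image by (rule imageI)
    then show ?thesis
      by (simp add: stair_mon_Cons)
  qed
  show "ideal_gen {Hf c} \<subseteq> ?J" "ideal_gen {Hf c} \<subseteq> ideal_gen (insert (Hf c) (stair_mon As Bs ` T))"
    "ideal_gen (stair_mon As Bs ` T) \<subseteq> ideal_gen (insert (Hf c) (stair_mon As Bs ` T))"
    by (simp_all add: ideal_gen_mono subset_insertI)
  show "?J \<subseteq> {x + y | x y. x \<in> ideal_gen {Hf c} \<and> y \<in> {Hf a * k | k. k \<in> ideal_gen (stair_mon As Bs ` T)}}"
    by (rule ideal_gen_subset_sum_mult)
       (auto simp: shift_fst_def stair_mon_Cons ideal_gen_generator)
  show "Hf a * x \<in> ?J" if "x \<in> ideal_gen (insert (Hf c) (stair_mon As Bs ` T))" for x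
  proof (rule mult_mem_ideal_gen_colon[OF _ that])
    fix g assume "g \<in> insert (Hf c) (stair_mon As Bs ` T)"
    then consider "g = Hf c" | s where "s \<in> T" "g = stair_mon As Bs s"
      by blast
    then show "Hf a * g \<in> ?J"
    proof cases
      case 1
      have "Hf c \<in> ?J"
        by (simp add: ideal_gen_generator)
      then show ?thesis
        using 1 by (simp add: ideal_gen_closed)
    qed (auto intro: ideal_gen_generator shifted)
  qed
  show "x \<in> ideal_gen {Hf c}" if "Hf a * x \<in> ideal_gen {Hf c}" for x
    using prime_ideal_cancel[OF prime_ideal_H[OF c(1)] Hf_notin_ideal_H[OF c(2)]] that by blast
  show "\<exists>e w. x = e + Hf a * w \<and> e \<in> ideal_gen {Hf c}" if "Vf d * x \<in> ?J" for x
  proof -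
    have "?J \<subseteq> ideal_gen {Hf c, Hf a}"
      by (rule ideal_gen_subsetI) (auto simp: shift_fst_def stair_mon_Cons ideal_gen_generator ideal_gen_closed)
    then have "x \<in> ideal_gen {Hf c, Hf a}"
      using that prime_ideal_cancel[OF prime_ideal_HH[OF c(2)] Vf_notin_ideal_HH[OF d]] by blast
    then show ?thesis
      by (auto simp: ideal_gen_pair ideal_gen_singleton)
  qed
qed

lemma stair_mon_Cons_cases:
  obtains "fst s = 0" "stair_mon (a # As) Bs s = Vprod Bs (snd s)"
    | "0 < fst s" "stair_mon (a # As) Bs s = Hf a * stair_mon As Bs (fst s - 1, snd s)"
proof (cases "fst s = 0")
  case True
  then have "s = (0, snd s)"
    by (simp add: prod_eq_iff)
  then have "stair_mon (a # As) Bs s = Vprod Bs (snd s)"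
    by (metis stair_mon_first_column)
  then show ?thesis
    using that(1) True by blast
qed (simp add: that(2) stair_mon_Cons_pred)

lemma Vprod_mem_ideal_gen_Vprod:
  assumes "b \<le> b'"
  shows "Vprod Bs b' \<in> ideal_gen (insert (Vprod Bs b) E)"
proof (rule ideal_gen_dvd_mem)
  show "Vprod Bs b dvd Vprod Bs b'"
    using assms by (rule Vprod_dvd)
qed (simp add: ideal_gen_generator)

lemma Vf_regular_mod_stair_Cons_zero:
  assumes dB: "dist_list Bs" and b: "b \<le> length Bs"
    and ca: "\<not> proj_eq c a" and d: "\<And>j. j < b \<Longrightarrow> \<not> proj_eq (Bs!j) d"
    and row0: "\<forall>s\<in>S. fst s = 0 \<longrightarrow> b \<le> snd s"
    and x: "Vf d * x \<in> ideal_gen (insert (Hf c) (stair_mon (a # As) Bs ` S))"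
  shows "\<exists>e w. x = e + Hf a * w \<and> e \<in> ideal_gen {Hf c, Vprod Bs b}"
proof -
  have "ideal_gen (insert (Hf c) (stair_mon (a # As) Bs ` S)) \<subseteq> ideal_gen (insert (Vprod Bs b) {Hf c, Hf a})"
  proof (rule ideal_gen_subsetI)
    fix g assume "g \<in> insert (Hf c) (stair_mon (a # As) Bs ` S)"
    then consider "g = Hf c" | s where "s \<in> S" "g = stair_mon (a # As) Bs s"
      by blast
    then show "g \<in> ideal_gen (insert (Vprod Bs b) {Hf c, Hf a})"
    proof cases
      case (2 s)
      then show ?thesis
        using row0 by (cases rule: stair_mon_Cons_cases[of s a As Bs])
          (simp_all add: Vprod_mem_ideal_gen_Vprod ideal_gen_generator ideal_gen_closed)
    qed (simp add: ideal_gen_generator)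
  qed
  then have "x \<in> ideal_gen (insert (Vprod Bs b) {Hf c, Hf a})"
    using Vf_regular_mod_HH_Vprod[OF dB b ca d] x by blast
  then obtain z u w where "x = Vprod Bs b * z + Hf c * u + Hf a * w"
    by (auto simp: ideal_gen_triple)
  moreover have "Vprod Bs b * z + Hf c * u \<in> ideal_gen {Hf c, Vprod Bs b}"
    by (simp add: ideal_gen_generator ideal_gen_closed)
  ultimately show ?thesis
    by blast
qed

lemma nzd_mod_Vf_stair_Cons_zero:
  assumes dB: "dist_list Bs" and b: "b \<le> length Bs"
    and c: "valid_p1 c" "\<not> proj_eq c a" and d: "\<And>j. j < b \<Longrightarrow> \<not> proj_eq (Bs!j) d"
    and s0: "(0, b) \<in> S" "\<forall>s\<in>S. fst s = 0 \<longrightarrow> b \<le> snd s"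
    and IH: "nzd_mod (ideal_gen (insert (Hf c)
      (stair_mon As Bs ` insert (0, b) ((\<lambda>s. (fst s - 1, snd s)) ` {s\<in>S. 0 < fst s})))) (Vf d)"
  shows "nzd_mod (ideal_gen (insert (Hf c) (stair_mon (a # As) Bs ` S))) (Vf d)"
proof -
  define T where "T = insert (0, b) ((\<lambda>s. (fst s - 1, snd s)) ` {s\<in>S. 0 < fst s})"
  let ?J = "ideal_gen (insert (Hf c) (stair_mon (a # As) Bs ` S))"
  let ?J' = "ideal_gen (insert (Hf c) (stair_mon As Bs ` T))"
  let ?E = "ideal_gen {Hf c, Vprod Bs b}"
  have "stair_mon (a # As) Bs (0, b) \<in> ?J"
    using s0(1) by (intro ideal_gen_generator insertI2 imageI)
  moreover have "stair_mon As Bs (0, b) \<in> ?J'"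
    unfolding T_def by (intro ideal_gen_generator insertI2 imageI insertI1)
  ultimately have Vprod_J: "Vprod Bs b \<in> ?J" "Vprod Bs b \<in> ?J'"
    by (simp_all add: stair_mon_first_column)
  show ?thesis
  proof (rule nzd_mod_by_split[OF ideal_gen_is_ideal ideal_gen_is_ideal ideal_gen_is_ideal _ _ _ _ _ _ _ IH[folded T_def]])
    show "?E \<subseteq> ?J" "?E \<subseteq> ?J'"
      using Vprod_J by (auto intro!: ideal_gen_subsetI simp: ideal_gen_generator)
    show "ideal_gen (stair_mon As Bs ` T) \<subseteq> ?J'"
      by (simp add: ideal_gen_mono subset_insertI)
    show "?J \<subseteq> {x + y | x y. x \<in> ?E \<and> y \<in> {Hf a * k | k. k \<in> ideal_gen (stair_mon As Bs ` T)}}"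
    proof (rule ideal_gen_subset_sum_mult)
      fix g assume "g \<in> insert (Hf c) (stair_mon (a # As) Bs ` S)"
      then consider "g = Hf c" | s where "s \<in> S" "g = stair_mon (a # As) Bs s"
        by blast
      then show "g \<in> ?E \<or> (\<exists>k\<in>ideal_gen (stair_mon As Bs ` T). g = Hf a * k)"
      proof cases
        case (2 s)
        have "(fst s - 1, snd s) \<in> T" if "0 < fst s"
          using 2(1) that by (simp add: T_def)
        then show ?thesis
          using 2 s0(2) Vprod_mem_ideal_gen_Vprod[of b "snd s" Bs "{Hf c}"]
          by (cases rule: stair_mon_Cons_cases[of s a As Bs]) (auto simp: insert_commute intro: ideal_gen_generator)
      qed (simp add: ideal_gen_generator)
    qed
    show "Hf a * x \<in> ?J" if "x \<in> ?J'" for x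
    proof (rule mult_mem_ideal_gen_colon[OF _ that])
      fix g assume "g \<in> insert (Hf c) (stair_mon As Bs ` T)"
      then consider "g = Hf c" | "g = Vprod Bs b" | s where "s \<in> S" "0 < fst s" "g = stair_mon As Bs (fst s - 1, snd s)"
        unfolding T_def using stair_mon_first_column by auto
      then show "Hf a * g \<in> ?J"
      proof cases
        case 3
        then have "Hf a * g = stair_mon (a # As) Bs s"
          by (simp add: stair_mon_Cons_pred)
        then show ?thesis
          using 3(1) by (simp add: ideal_gen_generator)
      qed (use Vprod_J in \<open>simp_all add: ideal_gen_generator ideal_gen_closed\<close>)
    qed
    show "x \<in> ?E" if "Hf a * x \<in> ?E" for x
      using regular_mod_H_Vprod[OF dB b c(1) _ that] Hf_notin_I_pt[OF c(2)] by blast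
    show "\<exists>e w. x = e + Hf a * w \<and> e \<in> ?E" if "Vf d * x \<in> ?J" for x
      by (rule Vf_regular_mod_stair_Cons_zero[OF dB b c(2) d s0(2) that])
  qed
qed

lemma nzd_mod_Vf_stair_first_column:
  assumes dB: "dist_list Bs" and b: "b \<le> length Bs" and c: "valid_p1 c"
    and d: "\<forall>b\<in>set Bs. \<not> proj_eq b d"
    and S: "(0, b) \<in> S" "\<forall>s\<in>S. fst s = 0 \<and> b \<le> snd s"
  shows "nzd_mod (ideal_gen (insert (Hf c) (stair_mon As Bs ` S))) (Vf d)"
proof -
  have "stair_mon As Bs (0, b) \<in> ideal_gen (insert (Hf c) (stair_mon As Bs ` S))"
    using S(1) by (intro ideal_gen_generator insertI2 imageI)
  then have "Vprod Bs b \<in> ideal_gen (insert (Hf c) (stair_mon As Bs ` S))"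
    by (simp add: stair_mon_first_column)
  moreover have "stair_mon As Bs s \<in> ideal_gen {Hf c, Vprod Bs b}" if "s \<in> S" for s
  proof -
    have "s = (0, snd s)" "b \<le> snd s"
      using S(2) that by (simp_all add: prod_eq_iff)
    then show ?thesis
      using Vprod_mem_ideal_gen_Vprod[of b "snd s" Bs "{Hf c}"]
      by (metis insert_commute stair_mon_first_column)
  qed
  ultimately have "ideal_gen (insert (Hf c) (stair_mon As Bs ` S)) = ideal_gen {Hf c, Vprod Bs b}"
    by (intro equalityI ideal_gen_subsetI) (auto simp: ideal_gen_generator)
  moreover have "Vf d \<notin> I_pt (c, Bs!j)" if "j < b" for j
    using Vf_notin_I_pt d b that by simp
  ultimately show ?thesis
    unfolding nzd_mod_def by (auto intro: regular_mod_H_Vprod[OF dB b c, of "Vf d"])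
qed

theorem nzd_mod_Vf_stair:
  assumes "dist_list As" "dist_list Bs" "valid_p1 c" "valid_p1 d"
    and "\<forall>a\<in>set As. \<not> proj_eq c a" "\<forall>b\<in>set Bs. \<not> proj_eq b d"
    and "finite S" "S \<noteq> {}" "\<forall>s\<in>S. fst s \<le> length As \<and> snd s \<le> length Bs"
  shows "nzd_mod (ideal_gen (insert (Hf c) (stair_mon As Bs ` S))) (Vf d)"
  using assms
proof (induction As arbitrary: S)
  case Nil
  obtain s0 where s0: "s0 \<in> S" "\<forall>s\<in>S. snd s0 \<le> snd s"
    using finite_obtain_min_snd Nil.prems(7,8) by blast
  have "s0 = (0, snd s0)"
    using s0(1) Nil.prems(9) by (simp add: prod_eq_iff)
  then show ?case
    using nzd_mod_Vf_stair_first_column[OF Nil.prems(2) _ Nil.prems(3,6), of "snd s0" S] s0 Nil.prems(9) by auto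
next
  case (Cons a As)
  have dA: "dist_list As" and ca: "\<not> proj_eq c a" and c_As: "\<forall>a\<in>set As. \<not> proj_eq c a"
    using Cons.prems(1,5) dist_list_ConsD(1) by auto
  note IH = Cons.IH[OF dA Cons.prems(2-4) c_As Cons.prems(6)]
  show ?case
  proof (cases "\<exists>s\<in>S. fst s = 0")
    case True
    then obtain s0 where s0: "s0 \<in> {s\<in>S. fst s = 0}" "\<forall>s\<in>{s\<in>S. fst s = 0}. snd s0 \<le> snd s"
      using finite_obtain_min_snd[of "{s\<in>S. fst s = 0}"] Cons.prems(7) by auto
    let ?b = "snd s0"
    have s0': "(0, ?b) \<in> S" "\<forall>s\<in>S. fst s = 0 \<longrightarrow> ?b \<le> snd s"
      using s0 by (auto simp: prod_eq_iff) (metis prod.collapse)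
    have b: "?b \<le> length Bs"
      using s0(1) Cons.prems(9) by auto
    show ?thesis
    proof (rule nzd_mod_Vf_stair_Cons_zero[OF Cons.prems(2) b Cons.prems(3) ca _ s0' IH])
      show "\<not> proj_eq (Bs!j) d" if "j < ?b" for j
        using Cons.prems(6) b that by simp
    qed (use Cons.prems(7,9) b in auto)
  next
    case False
    define T where "T = (\<lambda>s. (fst s - 1, snd s)) ` S"
    have "shift_fst T = S"
      unfolding T_def using False by (intro shift_fst_pred_fst) auto
    moreover have "nzd_mod (ideal_gen (insert (Hf c) (stair_mon As Bs ` T))) (Vf d)"
      by (rule IH) (use Cons.prems(7,8,9) in \<open>auto simp: T_def\<close>)
    ultimately show ?thesis
      using nzd_mod_Vf_stair_Cons_pos[OF Cons.prems(3) ca Cons.prems(4)] by metis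
  qed
qed

section \<open>Factoring out the lines\<close>

lemma pts_hls_vls_simps [simp]: "pts (P, H, V) = P" "hls (P, H, V) = H" "vls (P, H, V) = V"
  by (simp_all add: pts_def hls_def vls_def)

lemma valid_lp_mono:
  assumes "valid_lp (P, H, V)" "P' \<subseteq> P" "H' \<subseteq> H" "V' \<subseteq> V"
  shows "valid_lp (P', H', V')"
proof -
  have "finite P'" "finite H'" "finite V'"
    using assms finite_subset unfolding valid_lp_def by auto
  moreover have "\<forall>Q\<in>P'. valid_p1 (fst Q) \<and> valid_p1 (snd Q)" "\<forall>a\<in>H'. valid_p1 a" "\<forall>b\<in>V'. valid_p1 b"
    using assms unfolding valid_lp_def by auto
  moreover have "\<forall>Q\<in>P'. \<forall>Q'\<in>P'. Q \<noteq> Q' \<longrightarrow> \<not> (proj_eq (fst Q) (fst Q') \<and> proj_eq (snd Q) (snd Q'))"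
    using assms(1,2) unfolding valid_lp_def pts_hls_vls_simps by (meson subsetD)
  moreover have "\<forall>a\<in>H'. \<forall>a'\<in>H'. a \<noteq> a' \<longrightarrow> \<not> proj_eq a a'"
    "\<forall>b\<in>V'. \<forall>b'\<in>V'. b \<noteq> b' \<longrightarrow> \<not> proj_eq b b'"
    "\<forall>Q\<in>P'. \<forall>a\<in>H'. \<not> proj_eq (fst Q) a" "\<forall>Q\<in>P'. \<forall>b\<in>V'. \<not> proj_eq (snd Q) b"
    using assms unfolding valid_lp_def pts_hls_vls_simps by (meson subsetD)+
  ultimately show ?thesis
    unfolding valid_lp_def pts_hls_vls_simps by blast
qed

lemma Lambda_notin_prime_ideal:
  assumes "prime_ideal I" "\<And>a. a \<in> hls W \<Longrightarrow> Hf a \<notin> I" "\<And>b. b \<in> vls W \<Longrightarrow> Vf b \<notin> I"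
  shows "Lambda W \<notin> I"
  using prime_ideal_prod_notin[of I "hls W" Hf] prime_ideal_prod_notin[of I "vls W" Vf] assms
  unfolding Lambda_def prime_ideal_def by blast

lemma Lambda_dvd:
  assumes W: "valid_lp W"
    and H: "\<And>a. a \<in> hls W \<Longrightarrow> f \<in> ideal_gen {Hf a}"
    and V: "\<And>b. b \<in> vls W \<Longrightarrow> f \<in> ideal_gen {Vf b}"
  shows "\<exists>g. f = Lambda W * g"
proof -
  have fin: "finite (hls W)" "finite (vls W)"
    and valid: "\<And>a. a \<in> hls W \<Longrightarrow> valid_p1 a" "\<And>b. b \<in> vls W \<Longrightarrow> valid_p1 b"
    and dist: "\<And>a a'. a \<in> hls W \<Longrightarrow> a' \<in> hls W \<Longrightarrow> a' \<noteq> a \<Longrightarrow> \<not> proj_eq a a'"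
      "\<And>b b'. b \<in> vls W \<Longrightarrow> b' \<in> vls W \<Longrightarrow> b' \<noteq> b \<Longrightarrow> \<not> proj_eq b b'"
    using W unfolding valid_lp_def by metis+
  have "f \<in> ideal_gen {prod Hf (hls W)}"
    using mem_ideal_gen_insert_prod[OF fin(1), where p = Hf and E = "{}" and f = f] H
    by (simp add: prime_ideal_H valid Hf_notin_ideal_H dist)
  then obtain r where r: "f = prod Hf (hls W) * r"
    by (auto simp: ideal_gen_singleton)
  have "r \<in> ideal_gen {Vf b}" if b: "b \<in> vls W" for b
  proof (rule prime_ideal_cancel[OF prime_ideal_V[OF valid(2)[OF b]]])
    show "prod Hf (hls W) \<notin> ideal_gen {Vf b}"
      by (rule prime_ideal_prod_notin[OF prime_ideal_V[OF valid(2)[OF b]]]) (simp add: Hf_notin_ideal_V valid)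
    show "prod Hf (hls W) * r \<in> ideal_gen {Vf b}"
      using V[OF b] r by simp
  qed
  then have "r \<in> ideal_gen {prod Vf (vls W)}"
    using mem_ideal_gen_insert_prod[OF fin(2), where p = Vf and E = "{}" and f = r]
    by (simp add: prime_ideal_V valid Vf_notin_ideal_V dist)
  then obtain g where "r = prod Vf (vls W) * g"
    by (auto simp: ideal_gen_singleton)
  then show ?thesis
    using r by (auto simp: Lambda_def mult_ac)
qed

definition components :: "lp \<Rightarrow> poly set set" where
  "components W = (\<lambda>a. ideal_gen {Hf a}) ` hls W \<union> (\<lambda>b. ideal_gen {Vf b}) ` vls W \<union> I_pt ` pts W"

lemma I_W_eq_Inter_components: "I_W W = \<Inter> (components W)"
  by (auto simp: I_W_def components_def)

lemma components_prime_Lambda_notin: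
  assumes valid: "valid_lp (P, hls W \<union> H, vls W \<union> V)"
    and disj: "hls W \<inter> H = {}" "vls W \<inter> V = {}"
    and I: "I \<in> components (P, H, V)"
  shows "prime_ideal I" "Lambda W \<notin> I"
proof -
  have valid_H: "\<And>a. a \<in> hls W \<union> H \<Longrightarrow> valid_p1 a"
    and valid_V: "\<And>b. b \<in> vls W \<union> V \<Longrightarrow> valid_p1 b"
    and valid_P: "\<And>Q. Q \<in> P \<Longrightarrow> valid_p1 (fst Q) \<and> valid_p1 (snd Q)"
    and dist_H: "\<And>a a'. a \<in> hls W \<union> H \<Longrightarrow> a' \<in> hls W \<union> H \<Longrightarrow> a \<noteq> a' \<Longrightarrow> \<not> proj_eq a a'"
    and dist_V: "\<And>b b'. b \<in> vls W \<union> V \<Longrightarrow> b' \<in> vls W \<union> V \<Longrightarrow> b \<noteq> b' \<Longrightarrow> \<not> proj_eq b b'"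
    and off_H: "\<And>Q a. Q \<in> P \<Longrightarrow> a \<in> hls W \<union> H \<Longrightarrow> \<not> proj_eq (fst Q) a"
    and off_V: "\<And>Q b. Q \<in> P \<Longrightarrow> b \<in> vls W \<union> V \<Longrightarrow> \<not> proj_eq (snd Q) b"
    using valid unfolding valid_lp_def pts_hls_vls_simps by simp_all
  consider a where "a \<in> H" "I = ideal_gen {Hf a}" | b where "b \<in> V" "I = ideal_gen {Vf b}"
    | Q where "Q \<in> P" "I = I_pt Q"
    using I unfolding components_def by auto
  then have "prime_ideal I \<and> Lambda W \<notin> I"
  proof cases
    case (1 a)
    moreover have "Hf a' \<notin> I" if "a' \<in> hls W" for a'
      using Hf_notin_ideal_H dist_H that 1 disj(1) by blast
    moreover have "Vf b \<notin> I" if "b \<in> vls W" for b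
      using Vf_notin_ideal_H valid_V that 1 by blast
    ultimately show ?thesis
      using prime_ideal_H valid_H Lambda_notin_prime_ideal by blast
  next
    case (2 b)
    moreover have "Vf b' \<notin> I" if "b' \<in> vls W" for b'
      using Vf_notin_ideal_V dist_V that 2 disj(2) by blast
    moreover have "Hf a \<notin> I" if "a \<in> hls W" for a
      using Hf_notin_ideal_V valid_H that 2 by blast
    ultimately show ?thesis
      using prime_ideal_V valid_V Lambda_notin_prime_ideal by blast
  next
    case (3 Q)
    then have "prime_ideal I"
      using prime_ideal_I_pt[of "fst Q" "snd Q"] valid_P by simp
    moreover have "Hf a \<notin> I" if "a \<in> hls W" for a
      using Hf_notin_I_pt[OF off_H, of Q a "snd Q"] that 3 by simp
    moreover have "Vf b \<notin> I" if "b \<in> vls W" for b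
      using Vf_notin_I_pt[OF off_V, of Q b "fst Q"] that 3 by simp
    ultimately show ?thesis
      using Lambda_notin_prime_ideal by blast
  qed
  then show "prime_ideal I" "Lambda W \<notin> I"
    by simp_all
qed

lemma I_W_Un_lines:
  assumes valid: "valid_lp (P, hls W \<union> H, vls W \<union> V)"
    and disj: "hls W \<inter> H = {}" "vls W \<inter> V = {}"
  shows "I_W (P, hls W \<union> H, vls W \<union> V) = {Lambda W * g | g. g \<in> I_W (P, H, V)}"
proof
  have W: "valid_lp (P, hls W, vls W)"
    using valid_lp_mono[OF valid] by blast
  have sub: "components (P, H, V) \<subseteq> components (P, hls W \<union> H, vls W \<union> V)"
    by (auto simp: components_def)
  show "I_W (P, hls W \<union> H, vls W \<union> V) \<subseteq> {Lambda W * g | g. g \<in> I_W (P, H, V)}"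
  proof
    fix f assume f: "f \<in> I_W (P, hls W \<union> H, vls W \<union> V)"
    have "\<exists>g. f = Lambda (P, hls W, vls W) * g"
      by (rule Lambda_dvd[OF W]) (use f in \<open>auto simp: I_W_def\<close>)
    then obtain g where g: "f = Lambda W * g"
      by (auto simp: Lambda_def)
    have "g \<in> I" if "I \<in> components (P, H, V)" for I
      using prime_ideal_cancel components_prime_Lambda_notin[OF valid disj that] f g sub that
      unfolding I_W_eq_Inter_components by blast
    then show "f \<in> {Lambda W * g | g. g \<in> I_W (P, H, V)}"
      using g unfolding I_W_eq_Inter_components by blast
  qed
  show "{Lambda W * g | g. g \<in> I_W (P, H, V)} \<subseteq> I_W (P, hls W \<union> H, vls W \<union> V)"
  proof clarify
    fix g assume g: "g \<in> I_W (P, H, V)"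
    have "Hf a dvd Lambda W" if "a \<in> hls W" for a
      using that W unfolding Lambda_def valid_lp_def by (auto intro: dvd_mult2 dvd_prodI)
    moreover have "Vf b dvd Lambda W" if "b \<in> vls W" for b
      using that W unfolding Lambda_def valid_lp_def by (auto intro: dvd_mult dvd_prodI)
    ultimately show "Lambda W * g \<in> I_W (P, hls W \<union> H, vls W \<union> V)"
      using g by (auto simp: I_W_def mem_ideal_gen_singleton_iff I_pt_def ideal_gen_closed)
  qed
qed

section \<open>Staircase ideals of points are Cohen--Macaulay\<close>

lemma exists_generic_p1:
  assumes "finite A" "\<forall>a\<in>A. valid_p1 a"
  obtains c where "valid_p1 c" "\<forall>a\<in>A. \<not> proj_eq c a \<and> \<not> proj_eq a c"
proof -
  obtain t :: complex where t: "t \<notin> (\<lambda>a. snd a / fst a) ` A"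
    using ex_new_if_finite[OF infinite_UNIV_char_0] assms(1) by blast
  have "\<not> proj_eq (1, t) a \<and> \<not> proj_eq a (1, t)" if a: "a \<in> A" for a
  proof (cases "fst a = 0")
    case True
    then have "snd a \<noteq> 0"
      using assms(2) a by (cases a) (auto simp: valid_p1_def)
    then show ?thesis
      using True by (simp add: proj_eq_def)
  next
    case False
    have "t \<noteq> snd a / fst a"
      using t a by blast
    then have "snd a \<noteq> t * fst a"
      using False by (simp add: field_simps)
    then show ?thesis
      by (auto simp: proj_eq_def mult.commute)
  qed
  moreover have "valid_p1 (1, t)"
    by (simp add: valid_p1_def)
  ultimately show ?thesis
    using that by blast
qed

lemma homog_pos_lin_form:
  assumes "v1 \<noteq> v2" "u \<noteq> 0 \<or> w \<noteq> 0"
  shows "homog_pos (lin_form v1 v2 u w)"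
  unfolding homog_pos_def
proof
  show "lin_form v1 v2 u w \<noteq> 0"
    using assms lin_form_eq_0_iff by blast
  have "lin_form v1 v2 u w = Poly_Mapping.single (Poly_Mapping.single v1 1) u
      + Poly_Mapping.single (Poly_Mapping.single v2 1) w"
    by (simp add: lin_form_def Const_mult_Var)
  then have keys: "Poly_Mapping.keys (lin_form v1 v2 u w) \<subseteq> {Poly_Mapping.single v1 1, Poly_Mapping.single v2 1}"
    using keys_add[of "Poly_Mapping.single (Poly_Mapping.single v1 1) u" "Poly_Mapping.single (Poly_Mapping.single v2 (1::nat)) w"]
    by (auto split: if_splits)
  have "tdeg (Poly_Mapping.single v 1) = 1" for v
    by (cases v) (simp_all add: tdeg_def lookup_single)
  then show "\<exists>d>0. \<forall>m\<in>Poly_Mapping.keys (lin_form v1 v2 u w). tdeg m = d"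
    using keys by (intro exI[of _ 1]) auto
qed

lemma homog_pos_Hf: "valid_p1 a \<Longrightarrow> homog_pos (Hf a)"
  by (cases a) (auto simp: Hf_lin_form valid_p1_def intro!: homog_pos_lin_form)

lemma homog_pos_Vf: "valid_p1 b \<Longrightarrow> homog_pos (Vf b)"
  by (cases b) (auto simp: Vf_lin_form valid_p1_def intro!: homog_pos_lin_form)

lemma I_X_eq: "I_X X = {f. \<forall>P\<in>X. f \<in> I_pt P}"
  by (simp add: I_X_def I_W_def)

lemma nzd_mod_I_X_Hf:
  assumes "\<forall>P\<in>X. valid_p1 (fst P) \<and> valid_p1 (snd P) \<and> \<not> proj_eq (fst P) c"
  shows "nzd_mod (I_X X) (Hf c)"
  unfolding nzd_mod_def I_X_eq
proof (intro allI impI CollectI ballI)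
  fix g P assume g: "Hf c * g \<in> {f. \<forall>P\<in>X. f \<in> I_pt P}" and P: "P \<in> X"
  obtain a b where P_eq: "P = (a, b)"
    by (cases P)
  then have "prime_ideal (I_pt P)" "Hf c \<notin> I_pt P"
    using assms P by (auto intro!: prime_ideal_I_pt Hf_notin_I_pt)
  moreover have "Hf c * g \<in> I_pt P"
    using g P by blast
  ultimately show "g \<in> I_pt P"
    by (rule prime_ideal_cancel)
qed

theorem ACM_if_I_X_stair:
  assumes dA: "dist_list As" and dB: "dist_list Bs"
    and S: "finite S" "S \<noteq> {}" "\<forall>s\<in>S. fst s \<le> length As \<and> snd s \<le> length Bs"
    and X: "X \<subseteq> set As \<times> set Bs" and I: "I_X X = ideal_gen (stair_mon As Bs ` S)"
  shows "ACM X"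
proof (cases "X = {}")
  case True
  then show ?thesis
    by (simp add: ACM_def CM_points_ideal_def I_X_eq)
next
  case False
  then obtain P0 where P0: "P0 \<in> X"
    by blast
  have valid_As: "\<forall>a\<in>set As. valid_p1 a" and valid_Bs: "\<forall>b\<in>set Bs. valid_p1 b"
    using dA dB by (simp_all add: dist_list_def)
  obtain c where c: "valid_p1 c" "\<forall>a\<in>set As. \<not> proj_eq c a \<and> \<not> proj_eq a c"
    using exists_generic_p1[of "set As"] valid_As by blast
  obtain d where d: "valid_p1 d" "\<forall>b\<in>set Bs. \<not> proj_eq d b \<and> \<not> proj_eq b d"
    using exists_generic_p1[of "set Bs"] valid_Bs by blast
  have "nzd_mod (I_X X) (Hf c)"
    using X valid_As valid_Bs c(2) by (intro nzd_mod_I_X_Hf) auto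
  moreover have "nzd_mod (ideal_gen (I_X X \<union> {Hf c})) (Vf d)"
    unfolding I ideal_gen_Un_ideal_gen using c d
    by (simp add: nzd_mod_Vf_stair[OF dA dB c(1) d(1) _ _ S])
  moreover have "I_X X \<union> {Hf c, Vf d} \<subseteq> ideal_gen (range Hf \<union> range Vf)"
  proof -
    have "I_X X \<subseteq> I_pt P0"
      using P0 by (auto simp: I_X_eq)
    also have "\<dots> \<subseteq> ideal_gen (range Hf \<union> range Vf)"
      by (auto simp: I_pt_def intro!: ideal_gen_mono)
    finally show ?thesis
      by (auto intro: ideal_gen_generator)
  qed
  then have "ideal_gen (I_X X \<union> {Hf c, Vf d}) \<noteq> UNIV"
    using one_notin_ideal_gen by blast
  ultimately show ?thesis
    unfolding ACM_def CM_points_ideal_def using homog_pos_Hf[OF c(1)] homog_pos_Vf[OF d(1)] by blast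
qed

section \<open>Intersecting two staircase ideals\<close>

lemma nth_mem_set_take: "i < n \<Longrightarrow> i < length xs \<Longrightarrow> xs!i \<in> set (take n xs)"
  using nth_mem[of i "take n xs"] by simp

lemma nth_mem_set_drop: "n \<le> i \<Longrightarrow> i < length xs \<Longrightarrow> xs!i \<in> set (drop n xs)"
  using nth_mem[of "i - n" "drop n xs"] by simp

lemma dist_list_nth_eq_iff: "dist_list As \<Longrightarrow> i < length As \<Longrightarrow> j < length As \<Longrightarrow> As!i = As!j \<longleftrightarrow> i = j"
  by (metis dist_list_proj_eq_iff proj_eq_refl)

lemma proj_distinct_Un_list:
  assumes L: "\<forall>a\<in>L. \<forall>a'\<in>L. a \<noteq> a' \<longrightarrow> \<not> proj_eq a a'" and dA: "dist_list As"
    and off: "\<And>a h. a \<in> set As \<Longrightarrow> h \<in> L \<Longrightarrow> \<not> proj_eq a h"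
    and a: "a \<in> L \<union> set As" "a' \<in> L \<union> set As" "a \<noteq> a'"
  shows "\<not> proj_eq a a'"
proof -
  consider "a \<in> L" "a' \<in> L" | "a \<in> set As" "a' \<in> L" | "a \<in> L" "a' \<in> set As" | "a \<in> set As" "a' \<in> set As"
    using a by blast
  then show ?thesis
  proof cases
    case 4
    then obtain i i' where "i < length As" "i' < length As" "a = As!i" "a' = As!i'"
      by (auto simp: in_set_conv_nth)
    then show ?thesis
      using dist_list_proj_eq_iff[OF dA] a(3) by auto
  qed (use L off proj_eq_sym a(3) in blast)+
qed

locale staircase_split =
  fixes W :: lp and As Bs :: "p1 list" and SA SB :: "(nat \<times> nat) set"
  assumes W: "valid_lp W" and dA: "dist_list As" and dB: "dist_list Bs"
    and As_off_lines: "\<And>a h. a \<in> set As \<Longrightarrow> h \<in> hls W \<Longrightarrow> \<not> proj_eq a h"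
    and Bs_off_lines: "\<And>b v. b \<in> set Bs \<Longrightarrow> v \<in> vls W \<Longrightarrow> \<not> proj_eq b v"
    and SA: "finite SA" "SA \<noteq> {}" "\<forall>s\<in>SA. fst s \<le> length As \<and> snd s \<le> length Bs"
    and SB: "finite SB" "SB \<noteq> {}" "\<forall>s\<in>SB. fst s \<le> length As \<and> snd s \<le> length Bs"
begin

definition a_cut :: nat where
  "a_cut = max (Min (fst ` SA)) (Min (fst ` SB))"

definition b_cut :: nat where
  "b_cut = max (Min (snd ` SA)) (Min (snd ` SB))"

definition new_pts :: "(p1 \<times> p1) set" where
  "new_pts = {(As!i, Bs!j) | i j. a_cut \<le> i \<and> i < length As \<and> b_cut \<le> j \<and> j < length Bs \<and>
     (under_stair SA i j \<or> under_stair SB i j)}"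

definition W' :: lp where
  "W' = (new_pts, hls W \<union> set (take a_cut As), vls W \<union> set (take b_cut Bs))"

text \<open>The corners of the staircase of the new points, in the coordinates of \<open>drop a_cut As\<close>
  and \<open>drop b_cut Bs\<close>.\<close>

definition join :: "(nat \<times> nat) set" where
  "join = (\<lambda>(s, t). (max (fst s) (fst t) - a_cut, max (snd s) (snd t) - b_cut)) ` (SA \<times> SB)"

lemma less_a_cut_iff: "i < a_cut \<longleftrightarrow> (\<forall>s\<in>SA. i < fst s) \<or> (\<forall>s\<in>SB. i < fst s)"
  using SA SB by (simp add: a_cut_def less_max_iff_disj Min_gr_iff)

lemma less_b_cut_iff: "j < b_cut \<longleftrightarrow> (\<forall>s\<in>SA. j < snd s) \<or> (\<forall>s\<in>SB. j < snd s)"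
  using SA SB by (simp add: b_cut_def less_max_iff_disj Min_gr_iff)

lemma a_cut_le: "a_cut \<le> length As"
  using SA SB by (auto simp: a_cut_def Min_le_iff)

lemma b_cut_le: "b_cut \<le> length Bs"
  using SA SB by (auto simp: b_cut_def Min_le_iff)

lemma I_W_new_subset_stair_ideal:
  assumes S: "S = SA \<or> S = SB"
  shows "I_W (new_pts, set (take a_cut As), set (take b_cut Bs)) \<subseteq> stair_ideal As Bs S"
proof
  fix f assume f: "f \<in> I_W (new_pts, set (take a_cut As), set (take b_cut Bs))"
  have H: "f \<in> ideal_gen {Hf (As!i)}" if "i < a_cut" for i
    using f that a_cut_le nth_mem_set_take[of i a_cut As] by (simp add: I_W_def)
  have V: "f \<in> ideal_gen {Vf (Bs!j)}" if "j < b_cut" for j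
    using f that b_cut_le nth_mem_set_take[of j b_cut Bs] by (simp add: I_W_def)
  show "f \<in> stair_ideal As Bs S"
    unfolding stair_ideal_def
  proof (intro CollectI conjI allI impI)
    show "f \<in> ideal_gen {Hf (As!i)}" if "\<forall>s\<in>S. i < fst s" for i
      using H S that less_a_cut_iff by blast
    show "f \<in> ideal_gen {Vf (Bs!j)}" if "\<forall>s\<in>S. j < snd s" for j
      using V S that less_b_cut_iff by blast
    fix i j assume ij: "i < length As" "j < length Bs" "under_stair S i j"
    show "f \<in> I_pt (As!i, Bs!j)"
    proof (cases "i < a_cut \<or> j < b_cut")
      case True
      then show ?thesis
        using H V ideal_H_subset_I_pt ideal_V_subset_I_pt by blast
    next
      case False
      then have "(As!i, Bs!j) \<in> new_pts"
        using ij S by (auto simp: new_pts_def not_less)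
      then show ?thesis
        using f by (simp add: I_W_def)
    qed
  qed
qed

lemma stair_ideal_inter:
  "stair_ideal As Bs SA \<inter> stair_ideal As Bs SB = I_W (new_pts, set (take a_cut As), set (take b_cut Bs))"
proof
  show "I_W (new_pts, set (take a_cut As), set (take b_cut Bs)) \<subseteq> stair_ideal As Bs SA \<inter> stair_ideal As Bs SB"
    using I_W_new_subset_stair_ideal by blast
  show "stair_ideal As Bs SA \<inter> stair_ideal As Bs SB \<subseteq> I_W (new_pts, set (take a_cut As), set (take b_cut Bs))"
  proof
    fix f assume f: "f \<in> stair_ideal As Bs SA \<inter> stair_ideal As Bs SB"
    have "f \<in> ideal_gen {Hf a}" if "a \<in> set (take a_cut As)" for a
    proof -
      obtain i where "i < a_cut" "a = As!i"
        using \<open>a \<in> set (take a_cut As)\<close> by (auto simp: in_set_conv_nth)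
      then show ?thesis
        using f less_a_cut_iff unfolding stair_ideal_def by blast
    qed
    moreover have "f \<in> ideal_gen {Vf b}" if "b \<in> set (take b_cut Bs)" for b
    proof -
      obtain j where "j < b_cut" "b = Bs!j"
        using \<open>b \<in> set (take b_cut Bs)\<close> by (auto simp: in_set_conv_nth)
      then show ?thesis
        using f less_b_cut_iff unfolding stair_ideal_def by blast
    qed
    moreover have "f \<in> I_pt P" if "P \<in> new_pts" for P
      using f that unfolding new_pts_def stair_ideal_def by blast
    ultimately show "f \<in> I_W (new_pts, set (take a_cut As), set (take b_cut Bs))"
      by (simp add: I_W_def)
  qed
qed

lemma lines_proj_distinct:
  "a \<in> hls W \<union> set As \<Longrightarrow> a' \<in> hls W \<union> set As \<Longrightarrow> a \<noteq> a' \<Longrightarrow> \<not> proj_eq a a'"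
  by (rule proj_distinct_Un_list[OF _ dA As_off_lines]) (use W in \<open>simp_all add: valid_lp_def\<close>)

lemma vlines_proj_distinct:
  "b \<in> vls W \<union> set Bs \<Longrightarrow> b' \<in> vls W \<union> set Bs \<Longrightarrow> b \<noteq> b' \<Longrightarrow> \<not> proj_eq b b'"
  by (rule proj_distinct_Un_list[OF _ dB Bs_off_lines]) (use W in \<open>simp_all add: valid_lp_def\<close>)

lemma new_pts_off_lines:
  assumes "P \<in> new_pts"
  shows "fst P \<notin> hls W \<union> set (take a_cut As)" "snd P \<notin> vls W \<union> set (take b_cut Bs)"
proof -
  obtain i j where ij: "P = (As!i, Bs!j)" "a_cut \<le> i" "i < length As" "b_cut \<le> j" "j < length Bs"
    using assms unfolding new_pts_def by blast
  have "As!i \<notin> set (take a_cut As)"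
  proof
    assume "As!i \<in> set (take a_cut As)"
    then obtain k where "k < length (take a_cut As)" "take a_cut As ! k = As!i"
      unfolding in_set_conv_nth by blast
    then show False
      using ij(2,3) dist_list_nth_eq_iff[OF dA, of k i] by simp
  qed
  moreover have "Bs!j \<notin> set (take b_cut Bs)"
  proof
    assume "Bs!j \<in> set (take b_cut Bs)"
    then obtain k where "k < length (take b_cut Bs)" "take b_cut Bs ! k = Bs!j"
      unfolding in_set_conv_nth by blast
    then show False
      using ij(4,5) dist_list_nth_eq_iff[OF dB, of k j] by simp
  qed
  moreover have "As!i \<notin> hls W" "Bs!j \<notin> vls W"
    using As_off_lines[OF nth_mem[OF ij(3)]] Bs_off_lines[OF nth_mem[OF ij(5)]] proj_eq_refl by blast+
  ultimately show "fst P \<notin> hls W \<union> set (take a_cut As)" "snd P \<notin> vls W \<union> set (take b_cut Bs)"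
    using ij(1) by simp_all
qed

lemma new_pts_proj_distinct:
  assumes Q: "Q \<in> new_pts" "Q' \<in> new_pts" "Q \<noteq> Q'"
  shows "\<not> (proj_eq (fst Q) (fst Q') \<and> proj_eq (snd Q) (snd Q'))"
proof -
  obtain i j i' j' where "Q = (As!i, Bs!j)" "Q' = (As!i', Bs!j')"
    "i < length As" "j < length Bs" "i' < length As" "j' < length Bs"
    using Q(1,2) unfolding new_pts_def by blast
  then show ?thesis
    using Q(3) dist_list_proj_eq_iff[OF dA] dist_list_proj_eq_iff[OF dB] by auto
qed

lemma valid_W': "valid_lp W'"
proof -
  have P: "new_pts \<subseteq> set As \<times> set Bs"
    by (auto simp: new_pts_def)
  have H: "hls W \<union> set (take a_cut As) \<subseteq> hls W \<union> set As"
    and V: "vls W \<union> set (take b_cut Bs) \<subseteq> vls W \<union> set Bs"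
    by (auto dest: in_set_takeD)
  have "finite new_pts"
    using P by (rule finite_subset) simp
  moreover have "finite (hls W \<union> set (take a_cut As))" "finite (vls W \<union> set (take b_cut Bs))"
    using W by (simp_all add: valid_lp_def)
  moreover have "\<forall>Q\<in>new_pts. valid_p1 (fst Q) \<and> valid_p1 (snd Q)"
    using P dA dB by (auto simp: dist_list_def)
  moreover have "\<forall>a\<in>hls W \<union> set (take a_cut As). valid_p1 a" "\<forall>b\<in>vls W \<union> set (take b_cut Bs). valid_p1 b"
    using W dA dB H V by (auto simp: valid_lp_def dist_list_def)
  moreover have "\<forall>Q\<in>new_pts. \<forall>Q'\<in>new_pts. Q \<noteq> Q' \<longrightarrow> \<not> (proj_eq (fst Q) (fst Q') \<and> proj_eq (snd Q) (snd Q'))"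
    using new_pts_proj_distinct by blast
  moreover have "\<forall>a\<in>hls W \<union> set (take a_cut As). \<forall>a'\<in>hls W \<union> set (take a_cut As). a \<noteq> a' \<longrightarrow> \<not> proj_eq a a'"
    "\<forall>b\<in>vls W \<union> set (take b_cut Bs). \<forall>b'\<in>vls W \<union> set (take b_cut Bs). b \<noteq> b' \<longrightarrow> \<not> proj_eq b b'"
    using lines_proj_distinct vlines_proj_distinct H V by blast+
  moreover have "\<forall>Q\<in>new_pts. \<forall>a\<in>hls W \<union> set (take a_cut As). \<not> proj_eq (fst Q) a"
  proof (intro ballI)
    fix Q a assume Q: "Q \<in> new_pts" and a: "a \<in> hls W \<union> set (take a_cut As)"
    have "fst Q \<in> hls W \<union> set As" "a \<in> hls W \<union> set As" "fst Q \<noteq> a"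
      using P Q H a new_pts_off_lines(1)[OF Q] by auto
    then show "\<not> proj_eq (fst Q) a"
      by (rule lines_proj_distinct)
  qed
  moreover have "\<forall>Q\<in>new_pts. \<forall>b\<in>vls W \<union> set (take b_cut Bs). \<not> proj_eq (snd Q) b"
  proof (intro ballI)
    fix Q b assume Q: "Q \<in> new_pts" and b: "b \<in> vls W \<union> set (take b_cut Bs)"
    have "snd Q \<in> vls W \<union> set Bs" "b \<in> vls W \<union> set Bs" "snd Q \<noteq> b"
      using P Q V b new_pts_off_lines(2)[OF Q] by auto
    then show "\<not> proj_eq (snd Q) b"
      by (rule vlines_proj_distinct)
  qed
  ultimately show ?thesis
    unfolding valid_lp_def W'_def pts_hls_vls_simps by blast
qed

lemma new_lines_disjoint: "hls W \<inter> set (take a_cut As) = {}" "vls W \<inter> set (take b_cut Bs) = {}"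
proof -
  have "h \<notin> set As" if "h \<in> hls W" for h
    using As_off_lines[of h h] that proj_eq_refl by blast
  moreover have "v \<notin> set Bs" if "v \<in> vls W" for v
    using Bs_off_lines[of v v] that proj_eq_refl by blast
  ultimately show "hls W \<inter> set (take a_cut As) = {}" "vls W \<inter> set (take b_cut Bs) = {}"
    by (meson disjoint_iff in_set_takeD)+
qed

lemma under_stair_join_iff:
  "under_stair join i j \<longleftrightarrow> under_stair SA (a_cut + i) (b_cut + j) \<or> under_stair SB (a_cut + i) (b_cut + j)"
  unfolding under_stair_def join_def by (auto simp: less_diff_conv less_max_iff_disj add.commute)

lemma join_first_row_column: "\<exists>u\<in>join. fst u = 0" "\<exists>u\<in>join. snd u = 0"
proof -
  obtain s t where "s \<in> SA" "t \<in> SB" "fst s = Min (fst ` SA)" "fst t = Min (fst ` SB)"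
    using Min_in[of "fst ` SA"] Min_in[of "fst ` SB"] SA SB by fastforce
  then show "\<exists>u\<in>join. fst u = 0"
    unfolding join_def a_cut_def by force
  obtain s t where "s \<in> SA" "t \<in> SB" "snd s = Min (snd ` SA)" "snd t = Min (snd ` SB)"
    using Min_in[of "snd ` SA"] Min_in[of "snd ` SB"] SA SB by fastforce
  then show "\<exists>u\<in>join. snd u = 0"
    unfolding join_def b_cut_def by force
qed

lemma join_bounded: "\<forall>u\<in>join. fst u \<le> length (drop a_cut As) \<and> snd u \<le> length (drop b_cut Bs)"
  using SA(3) SB(3) by (auto simp: join_def diff_le_mono)

lemma I_X_new_pts: "I_X new_pts = stair_ideal (drop a_cut As) (drop b_cut Bs) join"
proof -
  have "(\<forall>P\<in>new_pts. f \<in> I_pt P) \<longleftrightarrow>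
      (\<forall>i<length (drop a_cut As). \<forall>j<length (drop b_cut Bs). under_stair join i j \<longrightarrow>
         f \<in> I_pt (drop a_cut As ! i, drop b_cut Bs ! j))" for f
  proof
    assume f: "\<forall>P\<in>new_pts. f \<in> I_pt P"
    show "\<forall>i<length (drop a_cut As). \<forall>j<length (drop b_cut Bs). under_stair join i j \<longrightarrow>
        f \<in> I_pt (drop a_cut As ! i, drop b_cut Bs ! j)"
    proof (intro allI impI)
      fix i j assume "i < length (drop a_cut As)" "j < length (drop b_cut Bs)" "under_stair join i j"
      then have "(As!(a_cut + i), Bs!(b_cut + j)) \<in> new_pts"
        unfolding new_pts_def under_stair_join_iff by force
      then show "f \<in> I_pt (drop a_cut As ! i, drop b_cut Bs ! j)"
        using f a_cut_le b_cut_le by simp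
    qed
  next
    assume f: "\<forall>i<length (drop a_cut As). \<forall>j<length (drop b_cut Bs). under_stair join i j \<longrightarrow>
        f \<in> I_pt (drop a_cut As ! i, drop b_cut Bs ! j)"
    show "\<forall>P\<in>new_pts. f \<in> I_pt P"
    proof
      fix P assume "P \<in> new_pts"
      then obtain i j where ij: "P = (As!i, Bs!j)" "a_cut \<le> i" "i < length As" "b_cut \<le> j" "j < length Bs"
        "under_stair SA i j \<or> under_stair SB i j"
        unfolding new_pts_def by blast
      then have "under_stair join (i - a_cut) (j - b_cut)"
        unfolding under_stair_join_iff by simp
      moreover have "i - a_cut < length (drop a_cut As)" "j - b_cut < length (drop b_cut Bs)"
        using ij(2-5) by auto
      ultimately have "f \<in> I_pt (drop a_cut As ! (i - a_cut), drop b_cut Bs ! (j - b_cut))"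
        using f by blast
      then show "f \<in> I_pt P"
        using ij(1-5) by simp
    qed
  qed
  moreover have "\<not> (\<forall>s\<in>join. i < fst s)" "\<not> (\<forall>s\<in>join. j < snd s)" for i j
    using join_first_row_column by fastforce+
  ultimately show ?thesis
    unfolding I_X_eq stair_ideal_def by blast
qed

lemma ACM_new_pts: "ACM new_pts"
proof (rule ACM_if_I_X_stair[OF dist_list_drop[OF dA] dist_list_drop[OF dB] _ _ join_bounded])
  show "finite join" "join \<noteq> {}"
    using SA SB by (simp_all add: join_def)
  show "new_pts \<subseteq> set (drop a_cut As) \<times> set (drop b_cut Bs)"
    unfolding new_pts_def using nth_mem_set_drop by blast
  show "I_X new_pts = ideal_gen (stair_mon (drop a_cut As) (drop b_cut Bs) ` join)"
    using ideal_gen_stair_mon_eq[OF dist_list_drop[OF dA] dist_list_drop[OF dB] _ _ join_bounded] SA SB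
    by (simp add: I_X_new_pts join_def)
qed

lemma Lambda_neq_0: "Lambda W \<noteq> 0"
  using W by (auto simp: Lambda_def valid_lp_def Hf_neq_0 Vf_neq_0)

lemma union_lines_ACM_points_W': "union_lines_ACM_points W'"
  using valid_W' ACM_new_pts by (simp add: union_lines_ACM_points_def W'_def)

lemma Lambda_stair_inter:
  "{Lambda W * k | k. k \<in> ideal_gen (stair_mon As Bs ` SA)} \<inter> {Lambda W * k | k. k \<in> ideal_gen (stair_mon As Bs ` SB)}
     = I_W W'"
proof -
  have "{Lambda W * k | k. k \<in> ideal_gen (stair_mon As Bs ` SA)} \<inter> {Lambda W * k | k. k \<in> ideal_gen (stair_mon As Bs ` SB)}
      = {Lambda W * k | k. k \<in> stair_ideal As Bs SA \<inter> stair_ideal As Bs SB}"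
    using Lambda_neq_0 by (auto simp: ideal_gen_stair_mon_eq[OF dA dB SA] ideal_gen_stair_mon_eq[OF dA dB SB])
  also have "\<dots> = I_W W'"
    unfolding stair_ideal_inter W'_def
    by (rule I_W_Un_lines[symmetric, OF _ new_lines_disjoint]) (use valid_W' in \<open>simp add: W'_def\<close>)
  finally show ?thesis .
qed

end

section \<open>The standard generators\<close>

lemma good_labelling_dist_list: "good_labelling X pr As \<Longrightarrow> dist_list As"
  by (simp add: good_labelling_def dist_list_def)

lemma good_labelling_off_lines:
  assumes As: "good_labelling X pr As"
    and off: "\<And>P h. P \<in> X \<Longrightarrow> h \<in> L \<Longrightarrow> \<not> proj_eq (pr P) h"
    and a: "a \<in> set As" and h: "h \<in> L"
  shows "\<not> proj_eq a h"
proof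
  assume ah: "proj_eq a h"
  obtain P where P: "P \<in> X" "proj_eq (pr P) a"
    using As a unfolding good_labelling_def by blast
  have "valid_p1 a"
    using As a by (simp add: good_labelling_def)
  then have "proj_eq (pr P) h"
    using proj_eq_trans[OF P(2) ah] by blast
  then show False
    using off[OF P(1) h] by blast
qed

lemma alpha_le_length:
  assumes W: "valid_lp W" and Bs: "good_labelling (pts W) snd Bs" and a: "valid_p1 (As!i)"
  shows "alpha (pts W) As i \<le> length Bs"
proof -
  let ?T = "{P\<in>pts W. proj_eq (fst P) (As!i)}"
  have "\<exists>j<length Bs. proj_eq (snd P) (Bs!j)" if "P \<in> pts W" for P
    using Bs that unfolding good_labelling_def by (metis in_set_conv_nth)
  then obtain idx where idx: "\<And>P. P \<in> pts W \<Longrightarrow> idx P < length Bs \<and> proj_eq (snd P) (Bs!idx P)"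
    by metis
  have "inj_on idx ?T"
  proof (rule inj_onI)
    fix P Q assume P: "P \<in> ?T" and Q: "Q \<in> ?T" and eq: "idx P = idx Q"
    have PQ: "P \<in> pts W" "Q \<in> pts W"
      using P Q by simp_all
    have "valid_p1 (Bs!idx P)"
      using Bs idx[OF PQ(1)] by (simp add: good_labelling_def)
    moreover have "proj_eq (snd P) (Bs!idx P)" "proj_eq (snd Q) (Bs!idx P)"
      using idx[OF PQ(1)] idx[OF PQ(2)] eq by simp_all
    ultimately have "proj_eq (snd P) (snd Q)"
      using proj_eq_trans proj_eq_sym by blast
    moreover have "proj_eq (fst P) (As!i)" "proj_eq (fst Q) (As!i)"
      using P Q by simp_all
    then have "proj_eq (fst P) (fst Q)"
      using proj_eq_trans[OF _ proj_eq_sym a] by blast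
    ultimately show "P = Q"
      using PQ W unfolding valid_lp_def by blast
  qed
  moreover have "idx ` ?T \<subseteq> {..<length Bs}"
    using idx by auto
  ultimately have "card ?T \<le> card {..<length Bs}"
    by (intro card_inj_on_le) auto
  then show ?thesis
    by (simp add: alpha_def)
qed

lemma standard_gens_stair_mon:
  assumes W: "valid_lp W" and G: "standard_gens W G"
  obtains As Bs S0 where "good_labelling (pts W) fst As" "good_labelling (pts W) snd Bs"
    "finite S0" "\<forall>s\<in>S0. fst s \<le> length As \<and> snd s \<le> length Bs"
    "G = (\<lambda>s. Lambda W * stair_mon As Bs s) ` S0"
proof -
  obtain As Bs where As: "good_labelling (pts W) fst As" and Bs: "good_labelling (pts W) snd Bs"
    and G: "G = (\<lambda>f. Lambda W * f) ` gens_X (pts W) As Bs"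
    using G unfolding standard_gens_def by blast
  define C where "C = {i. 0 < i \<and> i < length As \<and> alpha (pts W) As i < alpha (pts W) As (i - 1)}"
  define S0 where "S0 = insert (length As, 0) (insert (0, length Bs) ((\<lambda>i. (i, alpha (pts W) As i)) ` C))"
  have "stair_mon As Bs (a, b) = (\<Prod>k<a. Hf (As!k)) * (\<Prod>k<b. Vf (Bs!k))" for a b
    by (simp add: stair_mon_def Hprod_def Vprod_def)
  then have "gens_X (pts W) As Bs = stair_mon As Bs ` S0"
    by (simp add: gens_X_def S0_def C_def setcompr_eq_image image_image)
  moreover have "finite S0"
    unfolding S0_def C_def by simp
  moreover have "\<forall>s\<in>S0. fst s \<le> length As \<and> snd s \<le> length Bs"
    using alpha_le_length[OF W Bs] As by (auto simp: S0_def C_def good_labelling_def)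
  ultimately show ?thesis
    using that[OF As Bs] G by (simp add: image_image)
qed

theorem theorem4p8:
  fixes W :: lp and G A B :: "poly set"
  assumes "union_lines_ACM_points W"
    and "standard_gens W G"
    and "A \<union> B = G" and "A \<inter> B = {}" and "A \<noteq> {}" and "B \<noteq> {}"
  shows "\<exists>W'. union_lines_ACM_points W' \<and> ideal_gen A \<inter> ideal_gen B = I_W W'"
proof -
  have W: "valid_lp W"
    using assms(1) by (simp add: union_lines_ACM_points_def)
  obtain As Bs S0 where As: "good_labelling (pts W) fst As" and Bs: "good_labelling (pts W) snd Bs"
    and S0: "finite S0" "\<forall>s\<in>S0. fst s \<le> length As \<and> snd s \<le> length Bs"
    and G: "G = (\<lambda>s. Lambda W * stair_mon As Bs s) ` S0"
    using standard_gens_stair_mon[OF W assms(2)] by blast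
  define SA where "SA = {s\<in>S0. Lambda W * stair_mon As Bs s \<in> A}"
  define SB where "SB = {s\<in>S0. Lambda W * stair_mon As Bs s \<in> B}"
  have A: "A = (\<lambda>s. Lambda W * stair_mon As Bs s) ` SA" and B: "B = (\<lambda>s. Lambda W * stair_mon As Bs s) ` SB"
    using assms(3) G by (auto simp: SA_def SB_def)
  interpret staircase_split W As Bs SA SB
  proof
    show "dist_list As" "dist_list Bs"
      using As Bs by (simp_all add: good_labelling_dist_list)
    show "\<not> proj_eq a h" if "a \<in> set As" "h \<in> hls W" for a h
      using good_labelling_off_lines[OF As _ that] W by (auto simp: valid_lp_def)
    show "\<not> proj_eq b v" if "b \<in> set Bs" "v \<in> vls W" for b v
      using good_labelling_off_lines[OF Bs _ that] W by (auto simp: valid_lp_def)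
  qed (use W S0 A B assms(5,6) in \<open>auto simp: SA_def SB_def\<close>)
  show ?thesis
    using Lambda_stair_inter union_lines_ACM_points_W' unfolding A B ideal_gen_image_mult by blast
qed

end
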